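(* Let $k\ge 1$ and let $(X_1,Y_1)$ and $(X_2,Y_2)$ be pairs of CW complexes, where each $X_i$ is $k$-Dehn and each $Y_i\subseteq X_i$ is a $k$-Dehn subcomplex. Suppose $(X_1,Y_1)$ and $(X_2,Y_2)$ are quasi-isometric as pairs. Then $\mathrm{VolD}^k_{(X_1,Y_1)}\asymp \mathrm{VolD}^k_{(X_2,Y_2)}$.
   Context: For functions $f,g:\mathbb N\to\mathbb N$ write $f\preceq g$ if there is $C>0$ with $f(x)\le C\,g(Cx+C)+Cx+C$ for all $x$, and $f\asymp g$ if $f\preceq g$ and $g\preceq f$. In a CW complex a cellular $k$-chain is a finite sum $u=\sum \alpha_i\sigma_i$ with $\alpha_i\in\mathbb Z$ and $\sigma_i$ distinct $k$-cells; its volume is $V^k(u)=\sum|\alpha_i|$. For a subcomplex $Z$ and a $(k-1)$-cycle $z$ in $Z$ that bounds in $Z$, the filling volume is $FV^k_Z(z)=\min\{V^k(u): u \text{ a } k\text{-chain in } Z,\ \partial u=z\}$. A CW complex $X$ is $k$-Dehn if it is $k$-connected, its filling-volume (higher Dehn) functions of all orders $\le k$ are finite-valued, and there is a uniform bound $r$ on the number of boundary faces of any $m$-cell for $m\le k+1$. For a subcomplex $Y\subseteq X$ (both $k$-Dehn), the $k$-volume distortion function is $\mathrm{VolD}^k_{(X,Y)}(n)=\max\{FV^k_Y(z): z \text{ a } (k-1)\text{-cycle in } Y,\ FV^k_X(z)\le n\}$. Complexes carry the path metric in which every edge has length $1$. A $(K,C)$-quasi-isometric embedding $f:X\to X'$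 satisfies $\frac1K d(x,y)-C\le d(f(x),f(y))\le Kd(x,y)+C$; it is a quasi-isometry if moreover every point of $X'$ is within $C$ of $f(X)$. Pairs $(X_1,Y_1)$, $(X_2,Y_2)$ with $Y_i\subseteq X_i$ are quasi-isometric as pairs if there is a quasi-isometry $f:X_1\to X_2$ with $f(Y_1)\subseteq Y_2$ and $f|_{Y_1}:Y_1\to Y_2$ a quasi-isometry. *)

theory Defs
  imports Main "HOL-Library.Extended_Nat"
begin

text \<open>A CW complex is recorded by its set of cells, their dimensions, the cellular
incidence numbers (cinc X s t = coefficient of the cell t in the cellular boundary of s),
the endpoints of every 1-cell, and for every 2-cell an attaching map given as a closed
edge loop (a list of oriented 1-cells; True = traversed from first to second endpoint).\<close>

record 'c cellcx =
  cells :: "'c set"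
  cdim  :: "'c \<Rightarrow> nat"
  cinc  :: "'c \<Rightarrow> 'c \<Rightarrow> int"
  cends :: "'c \<Rightarrow> 'c \<times> 'c"
  catt  :: "'c \<Rightarrow> ('c \<times> bool) list"

definition verts :: "'c cellcx \<Rightarrow> 'c set" where
  "verts X = {v \<in> cells X. cdim X v = 0}"

definition esrc :: "'c cellcx \<Rightarrow> 'c \<times> bool \<Rightarrow> 'c" where
  "esrc X eb = (if snd eb then fst (cends X (fst eb)) else snd (cends X (fst eb)))"

definition etgt :: "'c cellcx \<Rightarrow> 'c \<times> bool \<Rightarrow> 'c" where
  "etgt X eb = (if snd eb then snd (cends X (fst eb)) else fst (cends X (fst eb)))"

fun epath :: "'c cellcx \<Rightarrow> 'c \<Rightarrow> ('c \<times> bool) list \<Rightarrow> 'c \<Rightarrow> bool" where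
  "epath X v [] w = (v = w \<and> v \<in> verts X)"
| "epath X v (eb # p) w =
     (fst eb \<in> cells X \<and> cdim X (fst eb) = 1 \<and> esrc X eb = v \<and> v \<in> verts X
      \<and> epath X (etgt X eb) p w)"

definition rev_path :: "('c \<times> bool) list \<Rightarrow> ('c \<times> bool) list" where
  "rev_path p = rev (map (\<lambda>(e, b). (e, \<not> b)) p)"

definition traversals :: "('c \<times> bool) list \<Rightarrow> 'c \<Rightarrow> int" where
  "traversals p e = int (length (filter (\<lambda>x. x = (e, True)) p))
                    - int (length (filter (\<lambda>x. x = (e, False)) p))"

definition supp :: "('c \<Rightarrow> int) \<Rightarrow> 'c set" where
  "supp u = {s. u s \<noteq> 0}"

definition is_chain :: "'c cellcx \<Rightarrow> nat \<Rightarrow> ('c \<Rightarrow> int) \<Rightarrow> bool" where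
  "is_chain X m u \<longleftrightarrow> finite (supp u) \<and> (\<forall>s \<in> supp u. s \<in> cells X \<and> cdim X s = m)"

definition vol :: "('c \<Rightarrow> int) \<Rightarrow> nat" where
  "vol u = (\<Sum>s \<in> supp u. nat \<bar>u s\<bar>)"

definition bnd :: "'c cellcx \<Rightarrow> ('c \<Rightarrow> int) \<Rightarrow> ('c \<Rightarrow> int)" where
  "bnd X u = (\<lambda>t. \<Sum>s \<in> supp u. u s * cinc X s t)"

definition is_cycle :: "'c cellcx \<Rightarrow> nat \<Rightarrow> ('c \<Rightarrow> int) \<Rightarrow> bool" where
  "is_cycle X m z \<longleftrightarrow> is_chain X m z \<and> bnd X z = (\<lambda>_. 0)"

text \<open>Filling volume FV^m_X(z); it is infinite if z does not bound an m-chain in X.\<close>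
definition FV :: "'c cellcx \<Rightarrow> nat \<Rightarrow> ('c \<Rightarrow> int) \<Rightarrow> enat" where
  "FV X m z = (INF u \<in> {u. is_chain X m u \<and> bnd X u = z}. enat (vol u))"

definition cw :: "'c cellcx \<Rightarrow> bool" where
  "cw X \<longleftrightarrow>
     (\<forall>s \<in> cells X. finite (supp (cinc X s))
        \<and> (\<forall>t \<in> supp (cinc X s). t \<in> cells X \<and> cdim X t + 1 = cdim X s)
        \<and> bnd X (cinc X s) = (\<lambda>_. 0))
   \<and> (\<forall>e \<in> cells X. cdim X e = 1 \<longrightarrow>
        fst (cends X e) \<in> verts X \<and> snd (cends X e) \<in> verts X
        \<and> cinc X e = (\<lambda>t. (if t = snd (cends X e) then 1 else 0)
                         - (if t = fst (cends X e) then 1 else 0)))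
   \<and> (\<forall>s \<in> cells X. cdim X s = 2 \<longrightarrow>
        (catt X s = [] \<or> (\<exists>v. epath X v (catt X s) v))
        \<and> cinc X s = traversals (catt X s))"

definition subcomplex :: "'c cellcx \<Rightarrow> 'c set \<Rightarrow> bool" where
  "subcomplex X D \<longleftrightarrow> D \<subseteq> cells X
     \<and> (\<forall>s \<in> D. \<forall>t \<in> supp (cinc X s). t \<in> D)
     \<and> (\<forall>e \<in> D. cdim X e = 1 \<longrightarrow> fst (cends X e) \<in> D \<and> snd (cends X e) \<in> D)
     \<and> (\<forall>s \<in> D. cdim X s = 2 \<longrightarrow> (\<forall>eb \<in> set (catt X s). fst eb \<in> D))"

definition sub :: "'c cellcx \<Rightarrow> 'c set \<Rightarrow> 'c cellcx" where
  "sub X D = X\<lparr>cells := D\<rparr>"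

inductive hmove :: "'c cellcx \<Rightarrow> ('c \<times> bool) list \<Rightarrow> ('c \<times> bool) list \<Rightarrow> bool" for X where
  backtrack: "\<lbrakk> epath X v (p @ [(e, b), (e, \<not> b)] @ q) w; epath X v (p @ q) w \<rbrakk>
      \<Longrightarrow> hmove X (p @ [(e, b), (e, \<not> b)] @ q) (p @ q)"
| relator: "\<lbrakk> s \<in> cells X; cdim X s = 2;
             r \<in> {rotate i (catt X s) | i. True} \<union> {rotate i (rev_path (catt X s)) | i. True};
             epath X v (p @ r @ q) w; epath X v (p @ q) w \<rbrakk>
      \<Longrightarrow> hmove X (p @ r @ q) (p @ q)"

definition path_connected :: "'c cellcx \<Rightarrow> bool" where
  "path_connected X \<longleftrightarrow> verts X \<noteq> {} \<and> (\<forall>v \<in> verts X. \<forall>w \<in> verts X. \<exists>p. epath X v p w)"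

definition simply_connected :: "'c cellcx \<Rightarrow> bool" where
  "simply_connected X \<longleftrightarrow> path_connected X
     \<and> (\<forall>v p. epath X v p v \<longrightarrow> (symclp (hmove X))\<^sup>*\<^sup>* p [])"

text \<open>k-connected (via Hurewicz: connected, simply connected if k \<ge> 1, and vanishing
cellular homology in degrees 2..k).\<close>
definition k_connected :: "'c cellcx \<Rightarrow> nat \<Rightarrow> bool" where
  "k_connected X k \<longleftrightarrow> path_connected X
     \<and> (1 \<le> k \<longrightarrow> simply_connected X)
     \<and> (\<forall>m. 2 \<le> m \<and> m \<le> k \<longrightarrow>
          (\<forall>z. is_cycle X m z \<longrightarrow> (\<exists>u. is_chain X (Suc m) u \<and> bnd X u = z)))"

definition k_dehn :: "'c cellcx \<Rightarrow> nat \<Rightarrow> bool" where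
  "k_dehn X k \<longleftrightarrow> cw X \<and> k_connected X k
     \<and> (\<forall>j. 1 \<le> j \<and> j \<le> k \<longrightarrow>
          (\<forall>n. \<exists>B. \<forall>z. is_cycle X j z \<and> vol z \<le> n \<longrightarrow> FV X (Suc j) z \<le> enat B))
     \<and> (\<exists>r. \<forall>s \<in> cells X. cdim X s \<le> k + 1 \<longrightarrow>
          vol (cinc X s) \<le> r \<and> (cdim X s = 2 \<longrightarrow> length (catt X s) \<le> r))"

definition VolD :: "'c cellcx \<Rightarrow> 'c set \<Rightarrow> nat \<Rightarrow> nat \<Rightarrow> enat" where
  "VolD X D k n = (SUP z \<in> {z. is_cycle (sub X D) (k - 1) z \<and> FV X k z \<le> enat n}.
                     FV (sub X D) k z)"

definition fpreceq :: "(nat \<Rightarrow> enat) \<Rightarrow> (nat \<Rightarrow> enat) \<Rightarrow> bool" (infix "\<preceq>\<^sub>f" 50) where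
  "f \<preceq>\<^sub>f g \<longleftrightarrow> (\<exists>C::nat. C > 0 \<and>
      (\<forall>x. f x \<le> enat C * g (C * x + C) + enat (C * x + C)))"

definition fasymp :: "(nat \<Rightarrow> enat) \<Rightarrow> (nat \<Rightarrow> enat) \<Rightarrow> bool" (infix "\<asymp>\<^sub>f" 50) where
  "f \<asymp>\<^sub>f g \<longleftrightarrow> f \<preceq>\<^sub>f g \<and> g \<preceq>\<^sub>f f"

definition gdist :: "'c cellcx \<Rightarrow> 'c \<Rightarrow> 'c \<Rightarrow> nat" where
  "gdist X v w = (LEAST n. \<exists>p. epath X v p w \<and> length p = n)"

definition qi_embedding :: "'a cellcx \<Rightarrow> 'b cellcx \<Rightarrow> ('a \<Rightarrow> 'b) \<Rightarrow> real \<Rightarrow> real \<Rightarrow> bool" where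
  "qi_embedding X X' f K C \<longleftrightarrow> K > 0 \<and> C \<ge> 0
     \<and> (\<forall>x \<in> verts X. f x \<in> verts X')
     \<and> (\<forall>x \<in> verts X. \<forall>y \<in> verts X.
          real (gdist X x y) / K - C \<le> real (gdist X' (f x) (f y))
          \<and> real (gdist X' (f x) (f y)) \<le> K * real (gdist X x y) + C)"

definition quasi_isometry :: "'a cellcx \<Rightarrow> 'b cellcx \<Rightarrow> ('a \<Rightarrow> 'b) \<Rightarrow> real \<Rightarrow> real \<Rightarrow> bool" where
  "quasi_isometry X X' f K C \<longleftrightarrow> qi_embedding X X' f K C
     \<and> (\<forall>y \<in> verts X'. \<exists>x \<in> verts X. real (gdist X' y (f x)) \<le> C)"

definition qi_pairs :: "'a cellcx \<Rightarrow> 'a set \<Rightarrow> 'b cellcx \<Rightarrow> 'b set \<Rightarrow> bool" where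
  "qi_pairs X1 D1 X2 D2 \<longleftrightarrow> (\<exists>f K C K' C'.
      quasi_isometry X1 X2 f K C
      \<and> (\<forall>x \<in> verts (sub X1 D1). f x \<in> verts (sub X2 D2))
      \<and> quasi_isometry (sub X1 D1) (sub X2 D2) f K' C')"

end

theory Submission
  imports Defs "HOL-Library.Function_Algebras"
begin

text \<open>A quasi-isometry of pairs gives vertex maps f : X1 \<rightarrow> X2 and g : X2 \<rightarrow> X1 that move the
  endpoints of an edge a bounded distance apart, respect the subcomplexes, and are coarsely
  inverse to each other on Y1 and Y2. Because the complexes are k-Dehn, the uniform filling bounds
  let such a vertex map be extended cell by cell to a chain map up to degree k in which every cell
  has an image of bounded volume, and likewise give a chain homotopy of bounded volume between
  g f and the identity of Y1. Now if a (k-1)-cycle z of Y1 bounds a chain u of volume n in X1,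
  then F z is a cycle of Y2 bounded by F u, of volume O(n), in X2; it is therefore filled in Y2 by a
  chain w of volume at most VolD_2(O(n)), and G w + H z fills z in Y1 with volume
  O(VolD_2(O(n)) + n). The other inequality follows by symmetry.\<close>

section \<open>Linear extension and volume of finitely supported functions\<close>

definition cell_chain :: "'c \<Rightarrow> 'c \<Rightarrow> int" where
  "cell_chain v = (\<lambda>t. if t = v then 1 else 0)"

definition lin_ext :: "('a \<Rightarrow> 'b \<Rightarrow> int) \<Rightarrow> ('a \<Rightarrow> int) \<Rightarrow> 'b \<Rightarrow> int" where
  "lin_ext F u = (\<lambda>t. \<Sum>s\<in>supp u. u s * F s t)"

lemma bnd_lin_ext: "bnd X u = lin_ext (cinc X) u"
  by (simp add: bnd_def lin_ext_def)

lemma lin_ext_superset: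
  assumes "finite A" "supp u \<subseteq> A"
  shows "lin_ext F u t = (\<Sum>s\<in>A. u s * F s t)"
  unfolding lin_ext_def using assms
  by (intro sum.mono_neutral_left) (auto simp: supp_def)

lemma supp_add: "supp (u + v) \<subseteq> supp u \<union> supp v"
  by (auto simp: supp_def)

lemma supp_diff: "supp (u - v) \<subseteq> supp u \<union> supp v"
  by (auto simp: supp_def)

lemma supp_uminus [simp]: "supp (- u) = supp u"
  by (simp add: supp_def)

lemma supp_cell_chain [simp]: "supp (cell_chain v) = {v}"
  by (auto simp: supp_def cell_chain_def)

lemma lin_ext_add:
  assumes "finite (supp u)" "finite (supp v)"
  shows "lin_ext F (u + v) = lin_ext F u + lin_ext F v"
proof
  fix t
  let ?A = "supp u \<union> supp v"
  have "lin_ext F (u + v) t = (\<Sum>s\<in>?A. (u + v) s * F s t)"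
    using assms supp_add[of u v] by (intro lin_ext_superset) auto
  also have "\<dots> = (\<Sum>s\<in>?A. u s * F s t) + (\<Sum>s\<in>?A. v s * F s t)"
    by (simp add: distrib_right sum.distrib)
  also have "\<dots> = lin_ext F u t + lin_ext F v t"
    using lin_ext_superset[of ?A u F t] lin_ext_superset[of ?A v F t] assms by simp
  finally show "lin_ext F (u + v) t = (lin_ext F u + lin_ext F v) t" by simp
qed

lemma lin_ext_diff:
  assumes "finite (supp u)" "finite (supp v)"
  shows "lin_ext F (u - v) = lin_ext F u - lin_ext F v"
proof
  fix t
  let ?A = "supp u \<union> supp v"
  have "lin_ext F (u - v) t = (\<Sum>s\<in>?A. (u - v) s * F s t)"
    using assms supp_diff[of u v] by (intro lin_ext_superset) auto
  also have "\<dots> = (\<Sum>s\<in>?A. u s * F s t) - (\<Sum>s\<in>?A. v s * F s t)"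
    by (simp add: left_diff_distrib sum_subtractf)
  also have "\<dots> = lin_ext F u t - lin_ext F v t"
    using lin_ext_superset[of ?A u F t] lin_ext_superset[of ?A v F t] assms by simp
  finally show "lin_ext F (u - v) t = (lin_ext F u - lin_ext F v) t" by simp
qed

lemma lin_ext_zero [simp]: "lin_ext F 0 = 0"
  by (simp add: lin_ext_def fun_eq_iff supp_def)

lemma lin_ext_cell_chain [simp]: "lin_ext F (cell_chain s) = F s"
  by (simp add: lin_ext_def fun_eq_iff) (simp add: cell_chain_def)

lemma lin_ext_family_diff: "lin_ext (\<lambda>s. F s - G s) u = lin_ext F u - lin_ext G u"
  by (simp add: lin_ext_def fun_eq_iff right_diff_distrib sum_subtractf)

lemma lin_ext_cong: "(\<And>s. s \<in> supp u \<Longrightarrow> F s = G s) \<Longrightarrow> lin_ext F u = lin_ext G u"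
  by (simp add: lin_ext_def)

lemma lin_ext_cell_chain_id:
  assumes "finite (supp u)"
  shows "lin_ext cell_chain u = u"
proof
  fix t
  have "lin_ext cell_chain u t = (\<Sum>s\<in>supp u. if s = t then u s else 0)"
    unfolding lin_ext_def by (intro sum.cong) (auto simp: cell_chain_def)
  also have "\<dots> = u t"
    using assms by (simp add: sum.delta') (auto simp: supp_def)
  finally show "lin_ext cell_chain u t = u t" .
qed

lemma supp_lin_ext: "supp (lin_ext F u) \<subseteq> (\<Union>s\<in>supp u. supp (F s))"
proof
  fix t assume "t \<in> supp (lin_ext F u)"
  then have "(\<Sum>s\<in>supp u. u s * F s t) \<noteq> 0" by (simp add: supp_def lin_ext_def)
  then obtain s where "s \<in> supp u" "u s * F s t \<noteq> 0"
    by (rule sum.not_neutral_contains_not_neutral)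
  then show "t \<in> (\<Union>s\<in>supp u. supp (F s))" by (auto simp: supp_def)
qed

lemma finite_supp_lin_ext:
  assumes "finite (supp u)" "\<And>s. s \<in> supp u \<Longrightarrow> finite (supp (F s))"
  shows "finite (supp (lin_ext F u))"
  using supp_lin_ext[of F u] assms by (meson finite_UN_I finite_subset)

lemma lin_ext_assoc:
  assumes fu: "finite (supp u)" and fF: "\<And>s. s \<in> supp u \<Longrightarrow> finite (supp (F s))"
  shows "lin_ext G (lin_ext F u) = lin_ext (\<lambda>s. lin_ext G (F s)) u"
proof
  fix t
  define A where "A = (\<Union>s\<in>supp u. supp (F s))"
  have fA: "finite A" using fu fF by (auto simp: A_def)
  have "lin_ext G (lin_ext F u) t = (\<Sum>x\<in>A. lin_ext F u x * G x t)"
    using fA supp_lin_ext[of F u] by (intro lin_ext_superset) (auto simp: A_def)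
  also have "\<dots> = (\<Sum>s\<in>supp u. u s * (\<Sum>x\<in>A. F s x * G x t))"
    by (simp add: lin_ext_def sum_distrib_right sum_distrib_left mult.assoc sum.swap[of _ A])
  also have "\<dots> = (\<Sum>s\<in>supp u. u s * lin_ext G (F s) t)"
    using fA by (intro sum.cong refl arg_cong2[where f = "(*)"] lin_ext_superset[symmetric])
      (auto simp: A_def)
  finally show "lin_ext G (lin_ext F u) t = lin_ext (\<lambda>s. lin_ext G (F s)) u t"
    by (simp add: lin_ext_def)
qed

lemma vol_int: "int (vol u) = (\<Sum>s\<in>supp u. \<bar>u s\<bar>)"
  by (simp add: vol_def)

lemma vol_superset:
  assumes "finite A" "supp u \<subseteq> A"
  shows "int (vol u) = (\<Sum>s\<in>A. \<bar>u s\<bar>)"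
  unfolding vol_int using assms
  by (intro sum.mono_neutral_left) (auto simp: supp_def)

lemma vol_cell_chain [simp]: "vol (cell_chain v) = 1"
  by (simp add: vol_def) (simp add: cell_chain_def)

lemma vol_uminus [simp]: "vol (- u) = vol u"
  by (simp add: vol_def)

lemma vol_add:
  assumes "finite (supp u)" "finite (supp v)"
  shows "vol (u + v) \<le> vol u + vol v"
proof -
  let ?A = "supp u \<union> supp v"
  have "int (vol (u + v)) = (\<Sum>s\<in>?A. \<bar>(u + v) s\<bar>)"
    using assms supp_add[of u v] by (intro vol_superset) auto
  also have "\<dots> \<le> (\<Sum>s\<in>?A. \<bar>u s\<bar> + \<bar>v s\<bar>)"
    by (intro sum_mono) (simp add: abs_triangle_ineq)
  also have "\<dots> = int (vol u) + int (vol v)"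
    using vol_superset[of ?A u] vol_superset[of ?A v] assms by (simp add: sum.distrib)
  finally show ?thesis by linarith
qed

lemma vol_diff:
  assumes "finite (supp u)" "finite (supp v)"
  shows "vol (u - v) \<le> vol u + vol v"
  using vol_add[of u "- v"] assms by simp

lemma vol_lin_ext:
  assumes fu: "finite (supp u)" and fF: "\<And>s. s \<in> supp u \<Longrightarrow> finite (supp (F s))"
    and M: "\<And>s. s \<in> supp u \<Longrightarrow> vol (F s) \<le> M"
  shows "vol (lin_ext F u) \<le> M * vol u"
proof -
  define A where "A = (\<Union>s\<in>supp u. supp (F s))"
  have fA: "finite A" using fu fF by (auto simp: A_def)
  have vF: "int (vol (F s)) = (\<Sum>x\<in>A. \<bar>F s x\<bar>)" if "s \<in> supp u" for s
    using fA that by (intro vol_superset) (auto simp: A_def)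
  have "int (vol (lin_ext F u)) = (\<Sum>x\<in>A. \<bar>lin_ext F u x\<bar>)"
    using fA supp_lin_ext[of F u] by (intro vol_superset) (auto simp: A_def)
  also have "\<dots> \<le> (\<Sum>x\<in>A. \<Sum>s\<in>supp u. \<bar>u s\<bar> * \<bar>F s x\<bar>)"
    by (intro sum_mono) (auto simp: lin_ext_def abs_mult intro: order.trans[OF sum_abs])
  also have "\<dots> = (\<Sum>s\<in>supp u. \<bar>u s\<bar> * int (vol (F s)))"
    by (subst sum.swap) (simp add: sum_distrib_left vF)
  also have "\<dots> \<le> (\<Sum>s\<in>supp u. \<bar>u s\<bar> * int M)"
    using M by (intro sum_mono mult_left_mono) auto
  also have "\<dots> = int M * int (vol u)"
    by (simp add: vol_int sum_distrib_left mult.commute)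
  finally show ?thesis by (metis of_nat_le_iff of_nat_mult)
qed

section \<open>Cellular chains, boundaries and filling volume\<close>

lemma sub_simps [simp]:
  "cells (sub X D) = D" "cdim (sub X D) = cdim X" "cinc (sub X D) = cinc X"
  "cends (sub X D) = cends X"
  by (simp_all add: sub_def)

lemma sub_sub [simp]: "sub (sub X D) D = sub X D"
  by (simp add: sub_def)

lemma bnd_sub [simp]: "bnd (sub X D) = bnd X"
  by (simp add: bnd_def fun_eq_iff)

lemma verts_sub_subset: "D \<subseteq> cells X \<Longrightarrow> verts (sub X D) \<subseteq> verts X"
  by (auto simp: verts_def)

lemma is_chain_finite: "is_chain X m u \<Longrightarrow> finite (supp u)"
  by (simp add: is_chain_def)

lemma is_chain_sub_iff: "is_chain (sub X D) m u \<longleftrightarrow> is_chain X m u \<and> supp u \<subseteq> D"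
  if "D \<subseteq> cells X"
  using that by (auto simp: is_chain_def)

lemma is_chain_add: "is_chain X m u \<Longrightarrow> is_chain X m v \<Longrightarrow> is_chain X m (u + v)"
  using supp_add[of u v] unfolding is_chain_def by (meson Un_iff finite_Un finite_subset subsetD)

lemma is_chain_diff: "is_chain X m u \<Longrightarrow> is_chain X m v \<Longrightarrow> is_chain X m (u - v)"
  using supp_diff[of u v] unfolding is_chain_def by (meson Un_iff finite_Un finite_subset subsetD)

lemma is_chain_cell_chain: "s \<in> cells X \<Longrightarrow> cdim X s = m \<Longrightarrow> is_chain X m (cell_chain s)"
  by (simp add: is_chain_def)

lemma is_chain_lin_ext:
  assumes "finite (supp u)" "\<And>s. s \<in> supp u \<Longrightarrow> is_chain T j (F s)"
  shows "is_chain T j (lin_ext F u)"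
  using assms finite_supp_lin_ext[of u F] supp_lin_ext[of F u]
  unfolding is_chain_def by blast

lemma cw_cinc:
  assumes "cw X" "s \<in> cells X"
  shows "finite (supp (cinc X s))" "bnd X (cinc X s) = 0"
    "\<And>t. t \<in> supp (cinc X s) \<Longrightarrow> t \<in> cells X \<and> cdim X t + 1 = cdim X s"
  using assms unfolding cw_def by (auto simp: zero_fun_def)

lemma cw_cinc_chain:
  assumes "cw X" "s \<in> cells X" "cdim X s = Suc j"
  shows "is_chain X j (cinc X s)"
  using cw_cinc[OF assms(1,2)] assms(3) by (auto simp: is_chain_def)

lemma cw_edge:
  assumes "cw X" "e \<in> cells X" "cdim X e = 1"
  shows "cinc X e = cell_chain (snd (cends X e)) - cell_chain (fst (cends X e))"
    "fst (cends X e) \<in> verts X" "snd (cends X e) \<in> verts X"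
  using assms unfolding cw_def by (auto simp: cell_chain_def fun_eq_iff)

lemma bnd_add: "finite (supp u) \<Longrightarrow> finite (supp v) \<Longrightarrow> bnd X (u + v) = bnd X u + bnd X v"
  by (simp add: bnd_lin_ext lin_ext_add)

lemma bnd_diff: "finite (supp u) \<Longrightarrow> finite (supp v) \<Longrightarrow> bnd X (u - v) = bnd X u - bnd X v"
  by (simp add: bnd_lin_ext lin_ext_diff)

lemma bnd_uminus [simp]: "bnd X (- u) = - bnd X u"
  by (simp add: bnd_def fun_eq_iff sum_negf)

lemma bnd_cell_chain [simp]: "bnd X (cell_chain s) = cinc X s"
  by (simp add: bnd_lin_ext)

lemma bnd_lin_ext_family:
  assumes "finite (supp u)" "\<And>s. s \<in> supp u \<Longrightarrow> finite (supp (F s))"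
  shows "bnd X (lin_ext F u) = lin_ext (\<lambda>s. bnd X (F s)) u"
  by (simp add: bnd_lin_ext lin_ext_assoc[OF assms])

lemma bnd_bnd:
  assumes "cw X" "is_chain X m u"
  shows "bnd X (bnd X u) = 0"
proof -
  have su: "\<And>s. s \<in> supp u \<Longrightarrow> s \<in> cells X" using assms(2) by (auto simp: is_chain_def)
  have "bnd X (bnd X u) = lin_ext (\<lambda>s. bnd X (cinc X s)) u"
    unfolding bnd_lin_ext[of X u] using assms su cw_cinc(1)[OF assms(1)]
    by (intro bnd_lin_ext_family) (auto simp: is_chain_def)
  also have "\<dots> = lin_ext (\<lambda>s. 0) u"
    using su cw_cinc(2)[OF assms(1)] by (intro lin_ext_cong) auto
  finally show ?thesis by (simp add: lin_ext_def zero_fun_def)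
qed

lemma vol_bnd_le:
  assumes "cw X" "is_chain X m u" "\<And>s. s \<in> cells X \<Longrightarrow> cdim X s = m \<Longrightarrow> vol (cinc X s) \<le> r"
  shows "vol (bnd X u) \<le> r * vol u"
  unfolding bnd_lin_ext using assms cw_cinc(1)[OF assms(1)]
  by (intro vol_lin_ext) (auto simp: is_chain_def)

lemma FV_le_vol: "is_chain X m u \<Longrightarrow> bnd X u = z \<Longrightarrow> FV X m z \<le> enat (vol u)"
  unfolding FV_def by (rule INF_lower2[of u]) auto

lemma filling_of_FV_le:
  assumes "FV X m z \<le> enat B"
  obtains u where "is_chain X m u" "bnd X u = z" "vol u \<le> B"
proof -
  let ?U = "{u. is_chain X m u \<and> bnd X u = z}"
  have "?U \<noteq> {}"
  proof
    assume "?U = {}"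
    then have "FV X m z = \<infinity>" unfolding FV_def by (metis INF_empty top_enat_def)
    with assms show False by simp
  qed
  then have "FV X m z \<in> (\<lambda>u. enat (vol u)) ` ?U"
    unfolding FV_def Inf_enat_def by (auto intro: LeastI)
  then show ?thesis using assms that by auto
qed

lemma is_cycle_iff: "is_cycle X m z \<longleftrightarrow> is_chain X m z \<and> bnd X z = 0"
  by (simp add: is_cycle_def zero_fun_def)

definition uniformly_fillable :: "'c cellcx \<Rightarrow> nat \<Rightarrow> bool" where
  "uniformly_fillable X j \<longleftrightarrow>
     (\<forall>n. \<exists>B. \<forall>z. is_cycle X j z \<and> vol z \<le> n \<longrightarrow> FV X (Suc j) z \<le> enat B)"

lemma uniformly_fillableE:
  assumes "uniformly_fillable X j"
  obtains B where "\<And>z. is_cycle X j z \<Longrightarrow> vol z \<le> n \<Longrightarrow>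
    \<exists>u. is_chain X (Suc j) u \<and> bnd X u = z \<and> vol u \<le> B"
  using assms filling_of_FV_le unfolding uniformly_fillable_def by metis

lemma k_dehnD:
  assumes "k_dehn X k"
  shows "cw X" "path_connected X" "\<And>j. 1 \<le> j \<Longrightarrow> j \<le> k \<Longrightarrow> uniformly_fillable X j"
  using assms by (simp_all add: k_dehn_def k_connected_def uniformly_fillable_def)

lemma k_dehn_boundary_bound:
  assumes "k_dehn X k"
  obtains r where "\<And>s. s \<in> cells X \<Longrightarrow> cdim X s \<le> k \<Longrightarrow> vol (cinc X s) \<le> r"
proof -
  obtain r where "\<forall>s\<in>cells X. cdim X s \<le> k + 1 \<longrightarrow> vol (cinc X s) \<le> r"
    using assms unfolding k_dehn_def by blast
  then have "\<And>s. s \<in> cells X \<Longrightarrow> cdim X s \<le> k \<Longrightarrow> vol (cinc X s) \<le> r" by simp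
  then show ?thesis by (rule that)
qed

section \<open>Edge paths and the path metric\<close>

lemma epath_verts: "epath X v p w \<Longrightarrow> v \<in> verts X \<and> w \<in> verts X"
  by (induction p arbitrary: v) auto

lemma epath_append: "epath X v (p @ q) w \<longleftrightarrow> (\<exists>m. epath X v p m \<and> epath X m q w)"
  by (induction p arbitrary: v) (auto dest: epath_verts)

lemma epath_rev_path: "epath X v p w \<Longrightarrow> epath X w (rev_path p) v"
proof (induction p arbitrary: v)
  case Nil
  then show ?case by (auto simp: rev_path_def)
next
  case (Cons eb p)
  obtain e b where eb: "eb = (e, b)" by fastforce
  have "epath X w (rev_path p) (etgt X eb)" using Cons by auto
  moreover have "epath X (etgt X eb) [(e, \<not> b)] v"
    using Cons.prems epath_verts[of X "etgt X eb" p w] by (auto simp: eb esrc_def etgt_def)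
  ultimately show ?case
    by (auto simp: epath_append rev_path_def eb)
qed

lemma epath_sub: "epath (sub X D) v p w \<Longrightarrow> D \<subseteq> cells X \<Longrightarrow> epath X v p w"
  by (induction p arbitrary: v) (auto simp: verts_def esrc_def etgt_def)

lemma epath_chain:
  assumes "cw X" "epath X v p w"
  shows "\<exists>u. is_chain X 1 u \<and> bnd X u = cell_chain w - cell_chain v \<and> vol u \<le> length p"
  using assms(2)
proof (induction p arbitrary: v)
  case Nil
  then show ?case by (intro exI[of _ 0]) (auto simp: bnd_lin_ext lin_ext_def vol_def is_chain_def supp_def)
next
  case (Cons eb p)
  obtain e b where eb: "eb = (e, b)" by fastforce
  from Cons.prems have e: "e \<in> cells X" "cdim X e = 1" and p: "epath X (etgt X eb) p w"
    and v: "esrc X eb = v" by (auto simp: eb)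
  obtain u where u: "is_chain X 1 u" "bnd X u = cell_chain w - cell_chain (etgt X eb)"
    "vol u \<le> length p" using Cons.IH[OF p] by blast
  define c where "c = (if b then cell_chain e else - cell_chain e)"
  have "bnd X c = cell_chain (etgt X eb) - cell_chain v"
    using cw_edge(1)[OF assms(1) e] v by (cases b) (auto simp: c_def eb esrc_def etgt_def)
  moreover have "is_chain X 1 c" "vol c = 1"
    using e by (auto simp: c_def is_chain_def)
  ultimately have c: "is_chain X 1 c" "vol c = 1" "bnd X c = cell_chain (etgt X eb) - cell_chain v"
    by blast+
  have "vol (u + c) \<le> length (eb # p)"
    using vol_add[of u c] u c by (simp add: is_chain_finite)
  moreover have "bnd X (u + c) = cell_chain w - cell_chain v"
    using u c by (simp add: bnd_add is_chain_finite)
  ultimately show ?case using is_chain_add[OF u(1) c(1)] by blast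
qed

lemma gdist_le: "epath X v p w \<Longrightarrow> gdist X v w \<le> length p"
  unfolding gdist_def by (rule Least_le) auto

lemma gdist_path:
  assumes "path_connected X" "v \<in> verts X" "w \<in> verts X"
  obtains p where "epath X v p w" "length p = gdist X v w"
proof -
  have "\<exists>p. epath X v p w" using assms by (auto simp: path_connected_def)
  then have "\<exists>p. epath X v p w \<and> length p = gdist X v w"
    unfolding gdist_def using LeastI_ex[of "\<lambda>n. \<exists>p. epath X v p w \<and> length p = n"] by blast
  then show ?thesis using that by blast
qed

lemma gdist_sym:
  assumes "path_connected X" "v \<in> verts X" "w \<in> verts X"
  shows "gdist X v w = gdist X w v"
proof -
  have le: "gdist X b a \<le> gdist X a b" if "a \<in> verts X" "b \<in> verts X" for a b
    using gdist_path[OF assms(1) that] gdist_le[OF epath_rev_path] by (metis length_map length_rev rev_path_def)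
  show ?thesis using le[of v w] le[of w v] assms by simp
qed

lemma gdist_triangle:
  assumes "path_connected X" "a \<in> verts X" "b \<in> verts X" "c \<in> verts X"
  shows "gdist X a c \<le> gdist X a b + gdist X b c"
proof -
  obtain p q where "epath X a p b" "length p = gdist X a b" "epath X b q c" "length q = gdist X b c"
    using gdist_path assms by metis
  then show ?thesis using gdist_le[of X a "p @ q" c] epath_append by fastforce
qed

lemma gdist_sub_le:
  assumes "path_connected (sub X D)" "D \<subseteq> cells X" "v \<in> verts (sub X D)" "w \<in> verts (sub X D)"
  shows "gdist X v w \<le> gdist (sub X D) v w"
  using gdist_path[OF assms(1,3,4)] gdist_le[OF epath_sub] assms(2) by metis

lemma gdist_edge_le_1:
  assumes "cw X" "e \<in> cells X" "cdim X e = 1"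
  shows "gdist X (fst (cends X e)) (snd (cends X e)) \<le> 1"
  using gdist_le[of X _ "[(e, True)]"] cw_edge[OF assms] assms by (simp add: esrc_def etgt_def)

lemma gdist_chain:
  assumes "cw X" "path_connected X" "v \<in> verts X" "w \<in> verts X"
  obtains u where "is_chain X 1 u" "bnd X u = cell_chain w - cell_chain v" "vol u \<le> gdist X v w"
  using gdist_path[OF assms(2-4)] epath_chain[OF assms(1)] by metis

section \<open>Coarse maps and quasi-isometries\<close>

definition coarse_map :: "'a cellcx \<Rightarrow> 'b cellcx \<Rightarrow> ('a \<Rightarrow> 'b) \<Rightarrow> real \<Rightarrow> bool" where
  "coarse_map X X' \<phi> L \<longleftrightarrow> (\<forall>v\<in>verts X. \<phi> v \<in> verts X')
     \<and> (\<forall>e\<in>cells X. cdim X e = 1 \<longrightarrow>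
          real (gdist X' (\<phi> (fst (cends X e))) (\<phi> (snd (cends X e)))) \<le> L)"

lemma coarse_map_mono: "coarse_map X X' \<phi> L \<Longrightarrow> L \<le> L' \<Longrightarrow> coarse_map X X' \<phi> L'"
  unfolding coarse_map_def by force

lemma coarse_map_edge_chain:
  assumes "cw X" "cw X'" "path_connected X'" "coarse_map X X' \<phi> L"
    and "e \<in> cells X" "cdim X e = 1"
  obtains u where "is_chain X' 1 u" "vol u \<le> nat \<lceil>L\<rceil>"
    "bnd X' u = cell_chain (\<phi> (snd (cends X e))) - cell_chain (\<phi> (fst (cends X e)))"
proof -
  have "\<phi> (fst (cends X e)) \<in> verts X'" "\<phi> (snd (cends X e)) \<in> verts X'"
    using assms cw_edge[OF assms(1,5,6)] by (auto simp: coarse_map_def)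
  then obtain u where u: "is_chain X' 1 u" "vol u \<le> gdist X' (\<phi> (fst (cends X e))) (\<phi> (snd (cends X e)))"
    "bnd X' u = cell_chain (\<phi> (snd (cends X e))) - cell_chain (\<phi> (fst (cends X e)))"
    using gdist_chain[OF assms(2,3)] by metis
  have "real (vol u) \<le> L" using u(2) assms(4-6) unfolding coarse_map_def by force
  then have "vol u \<le> nat \<lceil>L\<rceil>" by linarith
  with u that show ?thesis by blast
qed

definition coarse_inverse :: "'a cellcx \<Rightarrow> 'b cellcx \<Rightarrow> ('a \<Rightarrow> 'b) \<Rightarrow> ('b \<Rightarrow> 'a) \<Rightarrow> real \<Rightarrow> bool" where
  "coarse_inverse X X' f g E \<longleftrightarrow> (\<forall>y\<in>verts X'. g y \<in> verts X \<and> real (gdist X' (f (g y)) y) \<le> E)"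

lemma coarse_inverse_mono: "coarse_inverse X X' f g E \<Longrightarrow> E \<le> E' \<Longrightarrow> coarse_inverse X X' f g E'"
  unfolding coarse_inverse_def by force

definition pair_coarse_equivalence ::
    "'a cellcx \<Rightarrow> 'a set \<Rightarrow> 'b cellcx \<Rightarrow> 'b set \<Rightarrow> ('a \<Rightarrow> 'b) \<Rightarrow> ('b \<Rightarrow> 'a) \<Rightarrow> real \<Rightarrow> bool" where
  "pair_coarse_equivalence X1 D1 X2 D2 f g L \<longleftrightarrow>
     coarse_map X1 X2 f L \<and> coarse_map X2 X1 g L
     \<and> coarse_map (sub X1 D1) (sub X2 D2) f L \<and> coarse_map (sub X2 D2) (sub X1 D1) g L
     \<and> coarse_inverse (sub X1 D1) (sub X2 D2) f g L \<and> coarse_inverse (sub X2 D2) (sub X1 D1) g f L"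

lemma pair_coarse_equivalence_sym:
  "pair_coarse_equivalence X1 D1 X2 D2 f g L \<Longrightarrow> pair_coarse_equivalence X2 D2 X1 D1 g f L"
  by (auto simp: pair_coarse_equivalence_def)

lemma qi_embedding_upper:
  assumes "qi_embedding X X' f K C" "x \<in> verts X" "y \<in> verts X"
  shows "real (gdist X' (f x) (f y)) \<le> K * real (gdist X x y) + C"
  using assms unfolding qi_embedding_def by blast

lemma qi_embedding_lower:
  assumes "qi_embedding X X' f K C" "x \<in> verts X" "y \<in> verts X"
    and "real (gdist X' (f x) (f y)) \<le> m"
  shows "real (gdist X x y) \<le> K * (m + C)"
proof -
  have K: "K > 0" and "real (gdist X x y) / K - C \<le> real (gdist X' (f x) (f y))"
    using assms unfolding qi_embedding_def by blast+
  then have "real (gdist X x y) / K \<le> m + C" using assms(4) by linarith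
  then show ?thesis using K by (simp add: pos_divide_le_eq mult.commute)
qed

lemma qi_embedding_coarse_map:
  assumes "cw X" "qi_embedding X X' f K C"
  shows "coarse_map X X' f (K + C)"
  unfolding coarse_map_def
proof (intro conjI ballI impI)
  show "f v \<in> verts X'" if "v \<in> verts X" for v
    using assms(2) that by (simp add: qi_embedding_def)
  fix e assume e: "e \<in> cells X" "cdim X e = 1"
  have "K * real (gdist X (fst (cends X e)) (snd (cends X e))) \<le> K * 1"
    using gdist_edge_le_1[OF assms(1) e] assms(2) by (simp add: qi_embedding_def)
  then show "real (gdist X' (f (fst (cends X e))) (f (snd (cends X e)))) \<le> K + C"
    using qi_embedding_upper[OF assms(2)] cw_edge[OF assms(1) e] by fastforce
qed

lemma quasi_isometry_coarse_inverse:
  assumes "quasi_isometry X X' f K C" "path_connected X'"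
  shows "\<exists>g. coarse_inverse X X' f g C"
proof -
  have "\<forall>y\<in>verts X'. \<exists>x. x \<in> verts X \<and> real (gdist X' (f x) y) \<le> C"
    using assms gdist_sym[OF assms(2)] unfolding quasi_isometry_def qi_embedding_def by metis
  then show ?thesis unfolding coarse_inverse_def by (rule bchoice)
qed

lemma coarse_inverse_coarse_map:
  assumes "cw X'" "path_connected X'" "qi_embedding X X' f K C" "coarse_inverse X X' f g E"
  shows "coarse_map X' X g (K * (2 * E + 1 + C))"
  unfolding coarse_map_def
proof (intro conjI ballI impI)
  show "g y \<in> verts X" if "y \<in> verts X'" for y
    using assms(4) that by (simp add: coarse_inverse_def)
  fix e assume e: "e \<in> cells X'" "cdim X' e = 1"
  define a b where "a = fst (cends X' e)" and "b = snd (cends X' e)"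
  have ab: "a \<in> verts X'" "b \<in> verts X'" "gdist X' a b \<le> 1"
    using cw_edge[OF assms(1) e] gdist_edge_le_1[OF assms(1) e] by (auto simp: a_def b_def)
  have g: "g a \<in> verts X" "real (gdist X' (f (g a)) a) \<le> E"
    "g b \<in> verts X" "real (gdist X' (f (g b)) b) \<le> E"
    using assms(4) ab by (auto simp: coarse_inverse_def)
  have fg: "f (g a) \<in> verts X'" "f (g b) \<in> verts X'"
    using assms(3) g by (auto simp: qi_embedding_def)
  have "gdist X' (f (g a)) (f (g b)) \<le> gdist X' (f (g a)) a + gdist X' a b + gdist X' b (f (g b))"
    using gdist_triangle[OF assms(2) fg(1) ab(1) fg(2)] gdist_triangle[OF assms(2) ab(1,2) fg(2)]
    by linarith
  then have "real (gdist X' (f (g a)) (f (g b))) \<le> 2 * E + 1"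
    using g ab(3) gdist_sym[OF assms(2) ab(2) fg(2)] by linarith
  then show "real (gdist X (g (fst (cends X' e))) (g (snd (cends X' e)))) \<le> K * (2 * E + 1 + C)"
    using qi_embedding_lower[OF assms(3) g(1,3), of "2 * E + 1"] by (simp add: a_def b_def)
qed

lemma coarse_inverse_swap:
  assumes "qi_embedding X X' f K C" "coarse_inverse X X' f g E"
  shows "coarse_inverse X' X g f (K * (E + C))"
  unfolding coarse_inverse_def
proof
  fix v assume v: "v \<in> verts X"
  then have "f v \<in> verts X'" using assms(1) by (simp add: qi_embedding_def)
  then have "g (f v) \<in> verts X" "real (gdist X' (f (g (f v))) (f v)) \<le> E"
    using assms(2) by (auto simp: coarse_inverse_def)
  then show "f v \<in> verts X' \<and> real (gdist X (g (f v)) v) \<le> K * (E + C)"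
    using qi_embedding_lower[OF assms(1)] v \<open>f v \<in> verts X'\<close> by blast
qed

text \<open>Glue a coarse inverse on the subcomplex to one on the whole complex; since distances in
  the subcomplex dominate those in the complex, the glued map is a coarse inverse on both.\<close>
lemma coarse_inverse_pair:
  assumes g: "coarse_inverse X1 X2 f g C" and g': "coarse_inverse (sub X1 D1) (sub X2 D2) f g' C'"
    and f: "\<forall>x\<in>verts (sub X1 D1). f x \<in> verts (sub X2 D2)"
    and "path_connected (sub X2 D2)" "D1 \<subseteq> cells X1" "D2 \<subseteq> cells X2" "0 \<le> C" "0 \<le> C'"
  shows "\<exists>h. coarse_inverse X1 X2 f h (C + C') \<and> coarse_inverse (sub X1 D1) (sub X2 D2) f h C'"
proof -
  define h where "h y = (if y \<in> verts (sub X2 D2) then g' y else g y)" for y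
  have "coarse_inverse X1 X2 f h (C + C')"
    unfolding coarse_inverse_def
  proof
    fix y assume y: "y \<in> verts X2"
    show "h y \<in> verts X1 \<and> real (gdist X2 (f (h y)) y) \<le> C + C'"
    proof (cases "y \<in> verts (sub X2 D2)")
      case True
      then have g'y: "g' y \<in> verts (sub X1 D1)" "real (gdist (sub X2 D2) (f (g' y)) y) \<le> C'"
        using g' by (auto simp: coarse_inverse_def)
      have "gdist X2 (f (g' y)) y \<le> gdist (sub X2 D2) (f (g' y)) y"
        using gdist_sub_le[OF assms(4,6) _ True] f g'y(1) by blast
      then show ?thesis
        using True g'y verts_sub_subset[OF assms(5)] assms(7) by (auto simp: h_def)
    next
      case False
      then show ?thesis using g y assms(8) by (force simp: h_def coarse_inverse_def)
    qed
  qed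
  moreover have "coarse_inverse (sub X1 D1) (sub X2 D2) f h C'"
    using g' by (simp add: coarse_inverse_def h_def)
  ultimately show ?thesis by blast
qed

lemma qi_pairs_coarse_equivalence:
  assumes cw: "cw X1" "cw X2" "cw (sub X1 D1)" "cw (sub X2 D2)"
    and pc: "path_connected X2" "path_connected (sub X2 D2)"
    and D: "D1 \<subseteq> cells X1" "D2 \<subseteq> cells X2" and qi: "qi_pairs X1 D1 X2 D2"
  shows "\<exists>f g L. pair_coarse_equivalence X1 D1 X2 D2 f g L"
proof -
  obtain f K C K' C' where Q: "quasi_isometry X1 X2 f K C"
    and fY: "\<forall>x\<in>verts (sub X1 D1). f x \<in> verts (sub X2 D2)"
    and QY: "quasi_isometry (sub X1 D1) (sub X2 D2) f K' C'"
    using qi unfolding qi_pairs_def by blast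
  have E: "qi_embedding X1 X2 f K C" "qi_embedding (sub X1 D1) (sub X2 D2) f K' C'"
    using Q QY by (simp_all add: quasi_isometry_def)
  then have KC: "0 < K" "0 \<le> C" "0 < K'" "0 \<le> C'" by (simp_all add: qi_embedding_def)
  obtain g0 where g0: "coarse_inverse X1 X2 f g0 C"
    using quasi_isometry_coarse_inverse[OF Q pc(1)] by blast
  obtain g1 where g1: "coarse_inverse (sub X1 D1) (sub X2 D2) f g1 C'"
    using quasi_isometry_coarse_inverse[OF QY pc(2)] by blast
  obtain g where g: "coarse_inverse X1 X2 f g (C + C')"
    "coarse_inverse (sub X1 D1) (sub X2 D2) f g C'"
    using coarse_inverse_pair[OF g0 g1 fY pc(2) D KC(2,4)] by blast
  define L where "L = (K + C) + (K' + C') + K * (2 * (C + C') + 1 + C)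
    + K' * (2 * C' + 1 + C') + K' * (C' + C') + C'"
  have "K + C \<le> L" "K' + C' \<le> L" "K * (2 * (C + C') + 1 + C) \<le> L"
    "K' * (2 * C' + 1 + C') \<le> L" "K' * (C' + C') \<le> L" "C' \<le> L"
    using KC unfolding L_def by (simp_all add: add_nonneg_nonneg)
  then have "pair_coarse_equivalence X1 D1 X2 D2 f g L"
    unfolding pair_coarse_equivalence_def
    using coarse_map_mono[OF qi_embedding_coarse_map[OF cw(1) E(1)]]
      coarse_map_mono[OF qi_embedding_coarse_map[OF cw(3) E(2)]]
      coarse_map_mono[OF coarse_inverse_coarse_map[OF cw(2) pc(1) E(1) g(1)]]
      coarse_map_mono[OF coarse_inverse_coarse_map[OF cw(4) pc(2) E(2) g(2)]]
      coarse_inverse_mono[OF g(2)] coarse_inverse_mono[OF coarse_inverse_swap[OF E(2) g(2)]]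
    by blast
  then show ?thesis by blast
qed

section \<open>Bounded chain maps\<close>

text \<open>A chain map is recorded by the images F i s of the cells s of dimension i; the vertex
  map \<phi> prescribes it in degree 0.\<close>
definition chain_map_deg ::
    "'a cellcx \<Rightarrow> 'a set \<Rightarrow> 'b cellcx \<Rightarrow> 'b set \<Rightarrow> ('a \<Rightarrow> 'b) \<Rightarrow> (nat \<Rightarrow> 'a \<Rightarrow> 'b \<Rightarrow> int)
      \<Rightarrow> nat \<Rightarrow> nat \<Rightarrow> bool" where
  "chain_map_deg S Ds T Dt \<phi> F M i \<longleftrightarrow> (\<forall>s\<in>cells S. cdim S s = i \<longrightarrow>
      is_chain T i (F i s) \<and> (s \<in> Ds \<longrightarrow> is_chain (sub T Dt) i (F i s)) \<and> vol (F i s) \<le> M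
      \<and> (i = 0 \<longrightarrow> F 0 s = cell_chain (\<phi> s))
      \<and> (0 < i \<longrightarrow> bnd T (F i s) = lin_ext (F (i - 1)) (cinc S s)))"

lemma chain_map_deg_chain:
  assumes "chain_map_deg S Ds T Dt \<phi> F M i" "is_chain S i u"
  shows "is_chain T i (lin_ext (F i) u)"
    and "supp u \<subseteq> Ds \<Longrightarrow> is_chain (sub T Dt) i (lin_ext (F i) u)"
    and "vol (lin_ext (F i) u) \<le> M * vol u"
proof -
  have F: "is_chain T i (F i s) \<and> (s \<in> Ds \<longrightarrow> is_chain (sub T Dt) i (F i s)) \<and> vol (F i s) \<le> M"
    if "s \<in> supp u" for s
    using assms that by (auto simp: chain_map_deg_def is_chain_def)
  then show "is_chain T i (lin_ext (F i) u)" "vol (lin_ext (F i) u) \<le> M * vol u"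
    using is_chain_finite[OF assms(2)] by (auto intro: is_chain_lin_ext vol_lin_ext is_chain_finite)
  show "is_chain (sub T Dt) i (lin_ext (F i) u)" if "supp u \<subseteq> Ds"
    using F that is_chain_finite[OF assms(2)] by (auto intro: is_chain_lin_ext)
qed

lemma chain_map_deg_bnd:
  assumes "chain_map_deg S Ds T Dt \<phi> F M (Suc i)" "is_chain S (Suc i) u" "cw S"
  shows "bnd T (lin_ext (F (Suc i)) u) = lin_ext (F i) (bnd S u)"
proof -
  have su: "\<And>s. s \<in> supp u \<Longrightarrow> s \<in> cells S \<and> cdim S s = Suc i"
    using assms(2) by (auto simp: is_chain_def)
  have "bnd T (lin_ext (F (Suc i)) u) = lin_ext (\<lambda>s. bnd T (F (Suc i) s)) u"
    using assms su by (intro bnd_lin_ext_family) (auto simp: is_chain_def chain_map_deg_def)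
  also have "\<dots> = lin_ext (\<lambda>s. lin_ext (F i) (cinc S s)) u"
    using assms su by (intro lin_ext_cong) (auto simp: chain_map_deg_def)
  also have "\<dots> = lin_ext (F i) (bnd S u)"
    unfolding bnd_lin_ext using assms su cw_cinc(1)[OF assms(3)]
    by (intro lin_ext_assoc[symmetric]) (auto simp: is_chain_def)
  finally show ?thesis .
qed

lemma chain_map_deg_vertex:
  assumes "chain_map_deg S Ds T Dt \<phi> F M 0" "v \<in> verts S"
  shows "\<phi> v \<in> verts T"
  using assms by (auto simp: chain_map_deg_def verts_def is_chain_def)

lemma chain_map_deg_edge:
  assumes "cw S" "chain_map_deg S Ds T Dt \<phi> F M 0" "e \<in> cells S" "cdim S e = 1"
  shows "lin_ext (F 0) (cinc S e) = cell_chain (\<phi> (snd (cends S e))) - cell_chain (\<phi> (fst (cends S e)))"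
proof -
  have "lin_ext (F 0) (cinc S e) = lin_ext (\<lambda>v. cell_chain (\<phi> v)) (cinc S e)"
    using assms cw_cinc(3)[OF assms(1,3)] by (intro lin_ext_cong) (auto simp: chain_map_deg_def)
  then show ?thesis by (simp add: cw_edge(1)[OF assms(1,3,4)] lin_ext_diff)
qed

lemma chain_map_deg_mono:
  assumes "chain_map_deg S Ds T Dt \<phi> F M i" "M \<le> M'" "F' i = F i" "F' (i - 1) = F (i - 1)"
  shows "chain_map_deg S Ds T Dt \<phi> F' M' i"
  using assms unfolding chain_map_deg_def by (cases "i = 0") (auto intro: order_trans)

definition boundary_images_fillable ::
    "'a cellcx \<Rightarrow> 'a set \<Rightarrow> 'b cellcx \<Rightarrow> 'b set \<Rightarrow> ('a \<Rightarrow> 'b \<Rightarrow> int) \<Rightarrow> nat \<Rightarrow> nat \<Rightarrow> bool" where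
  "boundary_images_fillable S Ds T Dt f j B \<longleftrightarrow> (\<forall>s\<in>cells S. cdim S s = Suc j \<longrightarrow>
     (\<exists>u. is_chain T (Suc j) u \<and> (s \<in> Ds \<longrightarrow> is_chain (sub T Dt) (Suc j) u)
        \<and> bnd T u = lin_ext f (cinc S s) \<and> vol u \<le> B))"

lemma chain_map_deg_extend:
  assumes F: "\<forall>i\<le>j. chain_map_deg S Ds T Dt \<phi> F M i"
    and ext: "boundary_images_fillable S Ds T Dt (F j) j B"
  shows "\<exists>F' M'. \<forall>i\<le>Suc j. chain_map_deg S Ds T Dt \<phi> F' M' i"
proof -
  have "\<forall>s\<in>{s \<in> cells S. cdim S s = Suc j}. \<exists>u. is_chain T (Suc j) u
      \<and> (s \<in> Ds \<longrightarrow> is_chain (sub T Dt) (Suc j) u) \<and> bnd T u = lin_ext (F j) (cinc S s) \<and> vol u \<le> B"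
    using ext unfolding boundary_images_fillable_def by blast
  from bchoice[OF this] obtain G where G: "\<forall>s\<in>{s \<in> cells S. cdim S s = Suc j}. is_chain T (Suc j) (G s)
      \<and> (s \<in> Ds \<longrightarrow> is_chain (sub T Dt) (Suc j) (G s))
      \<and> bnd T (G s) = lin_ext (F j) (cinc S s) \<and> vol (G s) \<le> B"
    by blast
  have "chain_map_deg S Ds T Dt \<phi> (F(Suc j := G)) (max M B) i" if "i \<le> Suc j" for i
  proof (cases "i = Suc j")
    case True
    then show ?thesis using G by (auto simp: chain_map_deg_def)
  next
    case False
    then have ij: "i \<le> j" using that by simp
    then have "(F(Suc j := G)) i = F i" "(F(Suc j := G)) (i - 1) = F (i - 1)" by auto
    with F ij show ?thesis by (auto intro: chain_map_deg_mono[of _ _ _ _ _ F M])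
  qed
  then show ?thesis by blast
qed

lemma boundary_images_fillable_edges:
  assumes cwS: "cw S" "cw (sub S Ds)" and cwT: "cw T" "cw (sub T Dt)"
    and pcT: "path_connected T" "path_connected (sub T Dt)" and Dt: "Dt \<subseteq> cells T"
    and \<phi>: "coarse_map S T \<phi> L" "coarse_map (sub S Ds) (sub T Dt) \<phi> L"
    and F: "chain_map_deg S Ds T Dt \<phi> F M 0"
  shows "boundary_images_fillable S Ds T Dt (F 0) 0 (nat \<lceil>L\<rceil>)"
  unfolding boundary_images_fillable_def
proof (intro ballI impI)
  fix e assume e: "e \<in> cells S" "cdim S e = Suc 0"
  have Fe: "lin_ext (F 0) (cinc S e) = cell_chain (\<phi> (snd (cends S e))) - cell_chain (\<phi> (fst (cends S e)))"
    using chain_map_deg_edge[OF cwS(1) F] e by simp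
  show "\<exists>u. is_chain T (Suc 0) u \<and> (e \<in> Ds \<longrightarrow> is_chain (sub T Dt) (Suc 0) u)
      \<and> bnd T u = lin_ext (F 0) (cinc S e) \<and> vol u \<le> nat \<lceil>L\<rceil>"
  proof (cases "e \<in> Ds")
    case True
    then obtain u where "is_chain (sub T Dt) 1 u" "vol u \<le> nat \<lceil>L\<rceil>"
      "bnd T u = cell_chain (\<phi> (snd (cends S e))) - cell_chain (\<phi> (fst (cends S e)))"
      using coarse_map_edge_chain[OF cwS(2) cwT(2) pcT(2) \<phi>(2)] e by auto
    then show ?thesis using Fe Dt by (auto simp: is_chain_sub_iff)
  next
    case False
    then show ?thesis
      using coarse_map_edge_chain[OF cwS(1) cwT(1) pcT(1) \<phi>(1)] e Fe by (metis One_nat_def)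
  qed
qed

lemma chain_map_deg_boundary_cycle:
  assumes "cw S" "cw (sub S Ds)" and F: "chain_map_deg S Ds T Dt \<phi> F M (Suc i)"
    and s: "s \<in> cells S" "cdim S s = Suc (Suc i)"
  shows "is_cycle T (Suc i) (lin_ext (F (Suc i)) (cinc S s))"
    and "s \<in> Ds \<Longrightarrow> is_cycle (sub T Dt) (Suc i) (lin_ext (F (Suc i)) (cinc S s))"
proof -
  have c: "is_chain S (Suc i) (cinc S s)" using cw_cinc_chain[OF assms(1) s] .
  have "bnd T (lin_ext (F (Suc i)) (cinc S s)) = 0"
    using chain_map_deg_bnd[OF F(1) c assms(1)] cw_cinc(2)[OF assms(1) s(1)]
    by (simp add: lin_ext_def zero_fun_def)
  moreover have "supp (cinc S s) \<subseteq> Ds" if "s \<in> Ds"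
    using cw_cinc(3)[OF assms(2)] that by auto
  ultimately show "is_cycle T (Suc i) (lin_ext (F (Suc i)) (cinc S s))"
    "s \<in> Ds \<Longrightarrow> is_cycle (sub T Dt) (Suc i) (lin_ext (F (Suc i)) (cinc S s))"
    using chain_map_deg_chain(1,2)[OF F(1) c] by (auto simp: is_cycle_iff)
qed

text \<open>The image of the boundary of a cell of dimension at least 2 is a cycle of volume at most
  M r, so the uniform filling bounds of the target give images of uniformly bounded volume.\<close>
lemma boundary_images_fillable_cycles:
  assumes "cw S" "cw (sub S Ds)" "Dt \<subseteq> cells T"
    and F: "chain_map_deg S Ds T Dt \<phi> F M (Suc i)"
    and r: "\<And>s. s \<in> cells S \<Longrightarrow> cdim S s = Suc (Suc i) \<Longrightarrow> vol (cinc S s) \<le> r"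
    and fill: "uniformly_fillable T (Suc i)" "uniformly_fillable (sub T Dt) (Suc i)"
  shows "\<exists>B. boundary_images_fillable S Ds T Dt (F (Suc i)) (Suc i) B"
proof -
  obtain B1 where B1: "\<And>z. is_cycle T (Suc i) z \<Longrightarrow> vol z \<le> M * r \<Longrightarrow>
      \<exists>u. is_chain T (Suc (Suc i)) u \<and> bnd T u = z \<and> vol u \<le> B1"
    using uniformly_fillableE[OF fill(1)] by blast
  obtain B2 where B2: "\<And>z. is_cycle (sub T Dt) (Suc i) z \<Longrightarrow> vol z \<le> M * r \<Longrightarrow>
      \<exists>u. is_chain (sub T Dt) (Suc (Suc i)) u \<and> bnd T u = z \<and> vol u \<le> B2"
    using uniformly_fillableE[OF fill(2)] by (metis bnd_sub)
  have "boundary_images_fillable S Ds T Dt (F (Suc i)) (Suc i) (max B1 B2)"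
    unfolding boundary_images_fillable_def
  proof (intro ballI impI)
    fix s assume s: "s \<in> cells S" "cdim S s = Suc (Suc i)"
    let ?c = "lin_ext (F (Suc i)) (cinc S s)"
    have "vol ?c \<le> M * r"
      using chain_map_deg_chain(3)[OF F(1) cw_cinc_chain[OF assms(1) s]] r[OF s]
      by (meson le_trans mult_le_mono2)
    then show "\<exists>u. is_chain T (Suc (Suc i)) u \<and> (s \<in> Ds \<longrightarrow> is_chain (sub T Dt) (Suc (Suc i)) u)
        \<and> bnd T u = ?c \<and> vol u \<le> max B1 B2"
      using B1 B2 chain_map_deg_boundary_cycle[OF assms(1,2) F s] assms(3)
      by (cases "s \<in> Ds") (force simp: is_chain_sub_iff)+
  qed
  then show ?thesis by blast
qed

lemma bounded_chain_map_exists: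
  assumes cwS: "cw S" "cw (sub S Ds)" and cwT: "cw T" "cw (sub T Dt)"
    and pcT: "path_connected T" "path_connected (sub T Dt)" and Dt: "Dt \<subseteq> cells T"
    and \<phi>: "coarse_map S T \<phi> L" "coarse_map (sub S Ds) (sub T Dt) \<phi> L"
    and r: "\<And>s. s \<in> cells S \<Longrightarrow> cdim S s \<le> k \<Longrightarrow> vol (cinc S s) \<le> r"
    and fill: "\<And>j. 1 \<le> j \<Longrightarrow> j < k \<Longrightarrow> uniformly_fillable T j \<and> uniformly_fillable (sub T Dt) j"
  shows "\<exists>F M. \<forall>i\<le>k. chain_map_deg S Ds T Dt \<phi> F M i"
proof -
  have "j \<le> k \<longrightarrow> (\<exists>F M. \<forall>i\<le>j. chain_map_deg S Ds T Dt \<phi> F M i)" for j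
  proof (induction j)
    case 0
    have "chain_map_deg S Ds T Dt \<phi> (\<lambda>i s. cell_chain (\<phi> s)) 1 0"
      using \<phi> by (auto simp: chain_map_deg_def coarse_map_def verts_def is_chain_def)
    then show ?case by auto
  next
    case (Suc j)
    show ?case
    proof
      assume jk: "Suc j \<le> k"
      then obtain F M where F: "\<forall>i\<le>j. chain_map_deg S Ds T Dt \<phi> F M i" using Suc by auto
      have "\<exists>B. boundary_images_fillable S Ds T Dt (F j) j B"
      proof (cases j)
        case 0
        then show ?thesis
          using boundary_images_fillable_edges[OF cwS cwT pcT Dt \<phi>] F by auto
      next
        case (Suc i)
        then show ?thesis
          using boundary_images_fillable_cycles[OF cwS Dt, of \<phi> F M i r] F r fill[of j] jk
          by simp
      qed
      then show "\<exists>F M. \<forall>i\<le>Suc j. chain_map_deg S Ds T Dt \<phi> F M i"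
        using chain_map_deg_extend[OF F] by blast
    qed
  qed
  then show ?thesis by blast
qed

lemma chain_map_deg_comp:
  assumes cwS: "cw S" and cwT: "cw (sub T Dt)" and Ds: "Ds \<subseteq> cells S"
    and F: "\<And>i. i \<le> k \<Longrightarrow> chain_map_deg S Ds T Dt \<phi> F MF i"
    and G: "\<And>i. i \<le> k \<Longrightarrow> chain_map_deg (sub T Dt) Dt U Du \<psi> G MG i"
    and i: "i \<le> k"
  shows "chain_map_deg (sub S Ds) Ds U Du (\<psi> \<circ> \<phi>) (\<lambda>i s. lin_ext (G i) (F i s)) (MG * MF) i"
  unfolding chain_map_deg_def
proof (intro ballI impI conjI)
  fix s assume s: "s \<in> cells (sub S Ds)" "cdim (sub S Ds) s = i"
  then have s': "s \<in> cells S" "cdim S s = i" "s \<in> Ds" using Ds by auto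
  have Fs: "is_chain (sub T Dt) i (F i s)" "vol (F i s) \<le> MF"
    using F[OF i] s' by (auto simp: chain_map_deg_def)
  have FsD: "supp (F i s) \<subseteq> Dt" using Fs(1) by (auto simp: is_chain_def)
  show "is_chain U i (lin_ext (G i) (F i s))"
    using chain_map_deg_chain(1)[OF G[OF i] Fs(1)] .
  show "s \<in> Ds \<Longrightarrow> is_chain (sub U Du) i (lin_ext (G i) (F i s))"
    using chain_map_deg_chain(2)[OF G[OF i] Fs(1) FsD] .
  show "vol (lin_ext (G i) (F i s)) \<le> MG * MF"
    using chain_map_deg_chain(3)[OF G[OF i] Fs(1)] Fs(2) by (meson le_trans mult_le_mono2)
  show "i = 0 \<Longrightarrow> lin_ext (G 0) (F 0 s) = cell_chain ((\<psi> \<circ> \<phi>) s)"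
    using F[of 0] G[of 0] Fs(1) s' by (auto simp: chain_map_deg_def is_chain_def)
  show "bnd U (lin_ext (G i) (F i s))
      = lin_ext (\<lambda>s. lin_ext (G (i - 1)) (F (i - 1) s)) (cinc (sub S Ds) s)" if "0 < i"
  proof -
    obtain i' where i': "i = Suc i'" using \<open>0 < i\<close> by (cases i) auto
    have cs: "is_chain S i' (cinc S s)" using cw_cinc_chain[OF cwS s'(1)] s'(2) i' by simp
    have "bnd U (lin_ext (G i) (F i s)) = lin_ext (G i') (bnd T (F i s))"
      using chain_map_deg_bnd[OF G[OF i, unfolded i'] Fs(1)[unfolded i'] cwT] i' by simp
    also have "bnd T (F i s) = lin_ext (F i') (cinc S s)"
      using F[OF i] s' i' by (auto simp: chain_map_deg_def)
    also have "lin_ext (G i') (lin_ext (F i') (cinc S s))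
        = lin_ext (\<lambda>s. lin_ext (G i') (F i' s)) (cinc S s)"
      using cs F[of i'] i i' by (intro lin_ext_assoc) (auto simp: is_chain_def chain_map_deg_def)
    finally show ?thesis using i' by simp
  qed
qed

section \<open>Bounded chain homotopies\<close>

definition chain_homotopy_deg ::
    "'a cellcx \<Rightarrow> (nat \<Rightarrow> 'a \<Rightarrow> 'a \<Rightarrow> int) \<Rightarrow> (nat \<Rightarrow> 'a \<Rightarrow> 'a \<Rightarrow> int) \<Rightarrow> nat \<Rightarrow> nat \<Rightarrow> bool" where
  "chain_homotopy_deg S G H M i \<longleftrightarrow> (\<forall>s\<in>cells S. cdim S s = i \<longrightarrow>
      is_chain S (Suc i) (H i s) \<and> vol (H i s) \<le> M
      \<and> bnd S (H i s) = cell_chain s - G i s - (if i = 0 then 0 else lin_ext (H (i - 1)) (cinc S s)))"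

lemma chain_homotopy_deg_chain:
  assumes "chain_homotopy_deg S G H M i" "is_chain S i u"
  shows "is_chain S (Suc i) (lin_ext (H i) u)" and "vol (lin_ext (H i) u) \<le> M * vol u"
proof -
  have "is_chain S (Suc i) (H i s) \<and> vol (H i s) \<le> M" if "s \<in> supp u" for s
    using assms that by (auto simp: chain_homotopy_deg_def is_chain_def)
  then show "is_chain S (Suc i) (lin_ext (H i) u)" "vol (lin_ext (H i) u) \<le> M * vol u"
    using is_chain_finite[OF assms(2)] by (auto intro: is_chain_lin_ext vol_lin_ext is_chain_finite)
qed

lemma chain_homotopy_deg_bnd:
  assumes cwS: "cw S" and H: "chain_homotopy_deg S G H M i" and u: "is_chain S i u"
    and G: "\<And>s. s \<in> supp u \<Longrightarrow> finite (supp (G i s))"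
  shows "bnd S (lin_ext (H i) u)
    = u - lin_ext (G i) u - (if i = 0 then 0 else lin_ext (H (i - 1)) (bnd S u))"
proof -
  have su: "\<And>s. s \<in> supp u \<Longrightarrow> s \<in> cells S \<and> cdim S s = i" using u by (auto simp: is_chain_def)
  have fu: "finite (supp u)" using u by (rule is_chain_finite)
  have "bnd S (lin_ext (H i) u) = lin_ext (\<lambda>s. bnd S (H i s)) u"
    using H su fu by (intro bnd_lin_ext_family) (auto simp: is_chain_def chain_homotopy_deg_def)
  also have "\<dots> = lin_ext (\<lambda>s. cell_chain s - G i s
      - (if i = 0 then 0 else lin_ext (H (i - 1)) (cinc S s))) u"
    using H su by (intro lin_ext_cong) (auto simp: chain_homotopy_deg_def)
  also have "\<dots> = u - lin_ext (G i) u
      - lin_ext (\<lambda>s. if i = 0 then 0 else lin_ext (H (i - 1)) (cinc S s)) u"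
    by (simp add: lin_ext_family_diff lin_ext_cell_chain_id[OF fu])
  also have "lin_ext (\<lambda>s. if i = 0 then 0 else lin_ext (H (i - 1)) (cinc S s)) u
      = (if i = 0 then 0 else lin_ext (H (i - 1)) (bnd S u))"
  proof (cases "i = 0")
    case False
    then show ?thesis
      unfolding bnd_lin_ext using fu su cw_cinc(1)[OF cwS] by (simp add: lin_ext_assoc)
  qed (simp add: lin_ext_def zero_fun_def)
  finally show ?thesis .
qed

lemma chain_homotopy_deg_mono:
  assumes "chain_homotopy_deg S G H M i" "M \<le> M'" "H' i = H i" "H' (i - 1) = H (i - 1)"
  shows "chain_homotopy_deg S G H' M' i"
  using assms unfolding chain_homotopy_deg_def by (cases "i = 0") (auto intro: order_trans)

lemma chain_homotopy_deg_extend: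
  assumes H: "\<forall>i\<le>j. chain_homotopy_deg S G H M i"
    and ext: "\<forall>s\<in>{s \<in> cells S. cdim S s = Suc j}. \<exists>u. is_chain S (Suc (Suc j)) u \<and> vol u \<le> B
      \<and> bnd S u = cell_chain s - G (Suc j) s - lin_ext (H j) (cinc S s)"
  shows "\<exists>H' M'. \<forall>i\<le>Suc j. chain_homotopy_deg S G H' M' i"
proof -
  from bchoice[OF ext] obtain K where K: "\<forall>s\<in>{s \<in> cells S. cdim S s = Suc j}.
      is_chain S (Suc (Suc j)) (K s) \<and> vol (K s) \<le> B
      \<and> bnd S (K s) = cell_chain s - G (Suc j) s - lin_ext (H j) (cinc S s)"
    by blast
  have "chain_homotopy_deg S G (H(Suc j := K)) (max M B) i" if "i \<le> Suc j" for i
  proof (cases "i = Suc j")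
    case True
    then show ?thesis using K by (auto simp: chain_homotopy_deg_def)
  next
    case False
    then have ij: "i \<le> j" using that by simp
    then have "(H(Suc j := K)) i = H i" "(H(Suc j := K)) (i - 1) = H (i - 1)" by auto
    with H ij show ?thesis by (auto intro: chain_homotopy_deg_mono[of _ _ H M])
  qed
  then show ?thesis by blast
qed

lemma chain_homotopy_deg_start:
  assumes "cw S" "path_connected S" and G: "chain_map_deg S Ds S Dt \<theta> G MG 0"
    and \<theta>: "\<And>v. v \<in> verts S \<Longrightarrow> real (gdist S (\<theta> v) v) \<le> E"
  shows "\<exists>H. chain_homotopy_deg S G H (nat \<lceil>E\<rceil>) 0"
proof -
  have "\<forall>v\<in>verts S. \<exists>u. is_chain S 1 u \<and> vol u \<le> nat \<lceil>E\<rceil>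
      \<and> bnd S u = cell_chain v - cell_chain (\<theta> v)"
  proof
    fix v assume v: "v \<in> verts S"
    obtain u where u: "is_chain S 1 u" "bnd S u = cell_chain v - cell_chain (\<theta> v)"
      "vol u \<le> gdist S (\<theta> v) v"
      using gdist_chain[OF assms(1,2) chain_map_deg_vertex[OF G v] v] by blast
    have "real (vol u) \<le> E" using u(3) \<theta>[OF v] by linarith
    with u show "\<exists>u. is_chain S 1 u \<and> vol u \<le> nat \<lceil>E\<rceil> \<and> bnd S u = cell_chain v - cell_chain (\<theta> v)"
      by (intro exI[of _ u]) linarith
  qed
  from bchoice[OF this] obtain K where K: "\<forall>v\<in>verts S. is_chain S 1 (K v) \<and> vol (K v) \<le> nat \<lceil>E\<rceil>
      \<and> bnd S (K v) = cell_chain v - cell_chain (\<theta> v)" by blast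
  have "chain_homotopy_deg S G (\<lambda>i. K) (nat \<lceil>E\<rceil>) 0"
    using K G by (auto simp: chain_homotopy_deg_def chain_map_deg_def verts_def)
  then show ?thesis by blast
qed

text \<open>\<partial> H = 1 - G - H \<partial> on the boundary of s makes s - G s - H (\<partial> s) a cycle.\<close>
lemma chain_homotopy_deg_step_cycle:
  assumes cwS: "cw S"
    and G: "chain_map_deg S Ds S Dt \<theta> G MG (Suc j)" "chain_map_deg S Ds S Dt \<theta> G MG j"
    and H: "chain_homotopy_deg S G H M j"
    and s: "s \<in> cells S" "cdim S s = Suc j" and r: "vol (cinc S s) \<le> r"
  defines "c \<equiv> cell_chain s - G (Suc j) s - lin_ext (H j) (cinc S s)"
  shows "is_cycle S (Suc j) c" and "vol c \<le> 1 + MG + M * r"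
proof -
  have cs: "is_chain S j (cinc S s)" using cw_cinc_chain[OF cwS s] .
  have Gs: "is_chain S (Suc j) (G (Suc j) s)" "vol (G (Suc j) s) \<le> MG"
    "bnd S (G (Suc j) s) = lin_ext (G j) (cinc S s)"
    using G(1) s by (auto simp: chain_map_deg_def)
  have Hc: "is_chain S (Suc j) (lin_ext (H j) (cinc S s))"
    "vol (lin_ext (H j) (cinc S s)) \<le> M * r"
    using chain_homotopy_deg_chain[OF H cs] r by (auto intro: le_trans mult_le_mono2)
  have sc: "is_chain S (Suc j) (cell_chain s)" using s by (rule is_chain_cell_chain)
  have fG: "\<And>t. t \<in> supp (cinc S s) \<Longrightarrow> finite (supp (G j t))"
    using G(2) cs by (auto simp: is_chain_def chain_map_deg_def)
  have bH: "bnd S (lin_ext (H j) (cinc S s)) = cinc S s - lin_ext (G j) (cinc S s)"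
    using chain_homotopy_deg_bnd[OF cwS H cs fG] cw_cinc(2)[OF cwS s(1)]
    by (simp add: lin_ext_def zero_fun_def)
  have "bnd S c = bnd S (cell_chain s - G (Suc j) s) - bnd S (lin_ext (H j) (cinc S s))"
    unfolding c_def using sc Gs Hc by (intro bnd_diff) (auto intro: is_chain_finite is_chain_diff)
  also have "bnd S (cell_chain s - G (Suc j) s) = cinc S s - lin_ext (G j) (cinc S s)"
    using bnd_diff[of "cell_chain s" "G (Suc j) s" S] Gs is_chain_finite by fastforce
  finally have "bnd S c = 0" using bH by (simp add: zero_fun_def)
  then show "is_cycle S (Suc j) c"
    unfolding c_def is_cycle_iff using sc Gs Hc by (simp add: is_chain_diff)
  have "vol c \<le> vol (cell_chain s - G (Suc j) s) + vol (lin_ext (H j) (cinc S s))"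
    unfolding c_def using sc Gs Hc by (intro vol_diff) (auto intro: is_chain_finite is_chain_diff)
  also have "\<dots> \<le> 1 + MG + M * r"
    using vol_diff[of "cell_chain s" "G (Suc j) s"] Gs Hc is_chain_finite by fastforce
  finally show "vol c \<le> 1 + MG + M * r" .
qed

lemma chain_homotopy_deg_step_fillable:
  assumes cwS: "cw S"
    and G: "chain_map_deg S Ds S Dt \<theta> G MG (Suc j)" "chain_map_deg S Ds S Dt \<theta> G MG j"
    and H: "chain_homotopy_deg S G H M j"
    and r: "\<And>s. s \<in> cells S \<Longrightarrow> cdim S s = Suc j \<Longrightarrow> vol (cinc S s) \<le> r"
    and fill: "uniformly_fillable S (Suc j)"
  shows "\<exists>B. \<forall>s\<in>{s \<in> cells S. cdim S s = Suc j}. \<exists>u. is_chain S (Suc (Suc j)) u \<and> vol u \<le> B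
    \<and> bnd S u = cell_chain s - G (Suc j) s - lin_ext (H j) (cinc S s)"
proof -
  obtain B where B: "\<And>z. is_cycle S (Suc j) z \<Longrightarrow> vol z \<le> 1 + MG + M * r \<Longrightarrow>
      \<exists>u. is_chain S (Suc (Suc j)) u \<and> bnd S u = z \<and> vol u \<le> B"
    using uniformly_fillableE[OF fill] by blast
  have "\<exists>u. is_chain S (Suc (Suc j)) u \<and> vol u \<le> B
      \<and> bnd S u = cell_chain s - G (Suc j) s - lin_ext (H j) (cinc S s)"
    if "s \<in> cells S" "cdim S s = Suc j" for s
    using chain_homotopy_deg_step_cycle[OF cwS G H that r[OF that]] B by blast
  then show ?thesis by blast
qed

lemma bounded_homotopy_exists:
  assumes cwS: "cw S" and pcS: "path_connected S"
    and G: "\<And>i. i \<le> k \<Longrightarrow> chain_map_deg S Ds S Dt \<theta> G MG i"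
    and \<theta>: "\<And>v. v \<in> verts S \<Longrightarrow> real (gdist S (\<theta> v) v) \<le> E"
    and r: "\<And>s. s \<in> cells S \<Longrightarrow> cdim S s \<le> k \<Longrightarrow> vol (cinc S s) \<le> r"
    and fill: "\<And>j. 1 \<le> j \<Longrightarrow> j < k \<Longrightarrow> uniformly_fillable S j"
  shows "\<exists>H M. \<forall>i<k. chain_homotopy_deg S G H M i"
proof -
  have ind: "j < k \<longrightarrow> (\<exists>H M. \<forall>i\<le>j. chain_homotopy_deg S G H M i)" for j
  proof (induction j)
    case 0
    obtain H where "chain_homotopy_deg S G H (nat \<lceil>E\<rceil>) 0"
      using chain_homotopy_deg_start[OF cwS pcS G[of 0] \<theta>] by auto
    then show ?case by (intro impI exI[of _ H] exI[of _ "nat \<lceil>E\<rceil>"]) simp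
  next
    case (Suc j)
    show ?case
    proof
      assume jk: "Suc j < k"
      then obtain H M where H: "\<forall>i\<le>j. chain_homotopy_deg S G H M i" using Suc by auto
      have "chain_map_deg S Ds S Dt \<theta> G MG (Suc j)" "chain_map_deg S Ds S Dt \<theta> G MG j"
        "chain_homotopy_deg S G H M j" "uniformly_fillable S (Suc j)"
        using G H fill jk by auto
      then show "\<exists>H M. \<forall>i\<le>Suc j. chain_homotopy_deg S G H M i"
        using chain_homotopy_deg_step_fillable[OF cwS, of Ds Dt \<theta> G MG j H M r] r jk
          chain_homotopy_deg_extend[OF H] by fastforce
    qed
  qed
  show ?thesis
  proof (cases k)
    case (Suc k')
    then show ?thesis using ind[of k'] by (auto simp: less_Suc_eq_le)
  qed simp
qed

section \<open>Volume distortion\<close>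

lemma FV_le_VolD:
  "is_cycle (sub X D) (k - 1) z \<Longrightarrow> FV X k z \<le> enat n \<Longrightarrow> FV (sub X D) k z \<le> VolD X D k n"
  unfolding VolD_def by (rule SUP_upper) auto

lemma vol_le_of_FV_le:
  assumes "cw X" "\<And>s. s \<in> cells X \<Longrightarrow> cdim X s = Suc j \<Longrightarrow> vol (cinc X s) \<le> r"
    and "FV X (Suc j) z \<le> enat n"
  shows "vol z \<le> r * n"
proof -
  obtain u where u: "is_chain X (Suc j) u" "bnd X u = z" "vol u \<le> n"
    using filling_of_FV_le[OF assms(3)] .
  have "vol z \<le> r * vol u" using vol_bnd_le[OF assms(1) u(1) assms(2)] u(2) by simp
  also have "\<dots> \<le> r * n" using u(3) by (rule mult_le_mono2)
  finally show ?thesis .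
qed

lemma FV_image_le:
  assumes cwS: "cw S" and cwT: "cw T" and Ds: "Ds \<subseteq> cells S"
    and F: "chain_map_deg S Ds T Dt \<phi> F M (Suc j)" "chain_map_deg S Ds T Dt \<phi> F M j"
    and z: "is_cycle (sub S Ds) j z" and n: "FV S (Suc j) z \<le> enat n"
  shows "is_cycle (sub T Dt) j (lin_ext (F j) z)" and "FV T (Suc j) (lin_ext (F j) z) \<le> enat (M * n)"
proof -
  obtain u where u: "is_chain S (Suc j) u" "bnd S u = z" "vol u \<le> n"
    using filling_of_FV_le[OF n] .
  have zc: "is_chain S j z" "supp z \<subseteq> Ds" using z Ds by (auto simp: is_cycle_iff is_chain_sub_iff)
  let ?Fu = "lin_ext (F (Suc j)) u"
  have Fu: "is_chain T (Suc j) ?Fu" "bnd T ?Fu = lin_ext (F j) z" "vol ?Fu \<le> M * n"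
    using chain_map_deg_chain(1,3)[OF F(1) u(1)] chain_map_deg_bnd[OF F(1) u(1) cwS] u
    by (auto intro: le_trans mult_le_mono2)
  have "bnd T (lin_ext (F j) z) = 0" using bnd_bnd[OF cwT Fu(1)] Fu(2) by simp
  then show "is_cycle (sub T Dt) j (lin_ext (F j) z)"
    using chain_map_deg_chain(2)[OF F(2) zc] by (simp add: is_cycle_iff)
  show "FV T (Suc j) (lin_ext (F j) z) \<le> enat (M * n)"
    using FV_le_vol[OF Fu(1,2)] Fu(3) by (meson enat_ord_simps(1) order_trans)
qed

text \<open>If w fills the image of z, then G w + H z fills z, because \<partial> H z = z - G F z.\<close>
lemma FV_le_via_homotopy:
  assumes cwS: "cw S" and cwT: "cw T"
    and G: "chain_map_deg T Dt S Ds \<psi> G MG (Suc j)"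
    and GF: "chain_map_deg S Ds S Ds \<theta> (\<lambda>i s. lin_ext (G i) (F i s)) MGF j"
    and H: "chain_homotopy_deg S (\<lambda>i s. lin_ext (G i) (F i s)) H MH j"
    and z: "is_cycle S j z" and fin: "\<And>s. s \<in> supp z \<Longrightarrow> finite (supp (F j s))"
    and w: "is_chain T (Suc j) w" "bnd T w = lin_ext (F j) z"
  shows "FV S (Suc j) z \<le> enat (MG * vol w + MH * vol z)"
proof -
  let ?Gw = "lin_ext (G (Suc j)) w" and ?Hz = "lin_ext (H j) z"
  have zc: "is_chain S j z" "bnd S z = 0" using z by (auto simp: is_cycle_iff)
  have Gw: "is_chain S (Suc j) ?Gw" "vol ?Gw \<le> MG * vol w"
    using chain_map_deg_chain(1,3)[OF G w(1)] by auto
  have bGw: "bnd S ?Gw = lin_ext (\<lambda>s. lin_ext (G j) (F j s)) z"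
    using chain_map_deg_bnd[OF G w(1) cwT] w(2) lin_ext_assoc[OF is_chain_finite[OF zc(1)] fin]
    by simp
  have Hz: "is_chain S (Suc j) ?Hz" "vol ?Hz \<le> MH * vol z"
    using chain_homotopy_deg_chain[OF H zc(1)] by auto
  have "\<And>s. s \<in> supp z \<Longrightarrow> finite (supp (lin_ext (G j) (F j s)))"
    using GF zc(1) by (auto simp: chain_map_deg_def is_chain_def)
  then have bHz: "bnd S ?Hz = z - lin_ext (\<lambda>s. lin_ext (G j) (F j s)) z"
    using chain_homotopy_deg_bnd[OF cwS H zc(1)] zc(2) by simp
  have "bnd S (?Gw + ?Hz) = z"
    using bGw bHz Gw Hz by (simp add: bnd_add is_chain_finite)
  then have "FV S (Suc j) z \<le> enat (vol (?Gw + ?Hz))"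
    using FV_le_vol is_chain_add[OF Gw(1) Hz(1)] by blast
  also have "vol (?Gw + ?Hz) \<le> MG * vol w + MH * vol z"
    using vol_add[OF is_chain_finite[OF Gw(1)] is_chain_finite[OF Hz(1)]] Gw(2) Hz(2) by linarith
  finally show ?thesis by simp
qed

lemma FV_le_VolD_of_chain_maps:
  assumes cw: "cw X1" "cw X2" "cw (sub X1 D1)" "cw (sub X2 D2)" and D1: "D1 \<subseteq> cells X1"
    and r: "\<And>s. s \<in> cells X1 \<Longrightarrow> cdim X1 s = Suc j \<Longrightarrow> vol (cinc X1 s) \<le> r"
    and F: "chain_map_deg X1 D1 X2 D2 \<phi> F MF (Suc j)" "chain_map_deg X1 D1 X2 D2 \<phi> F MF j"
    and G: "chain_map_deg (sub X2 D2) D2 (sub X1 D1) D1 \<psi> G MG (Suc j)"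
    and GF: "chain_map_deg (sub X1 D1) D1 (sub X1 D1) D1 \<theta> (\<lambda>i s. lin_ext (G i) (F i s)) MGF j"
    and H: "chain_homotopy_deg (sub X1 D1) (\<lambda>i s. lin_ext (G i) (F i s)) H MH j"
    and C: "0 < C" "MF \<le> C" "MG \<le> C" "MH * r \<le> C"
    and z: "is_cycle (sub X1 D1) j z" "FV X1 (Suc j) z \<le> enat n"
  shows "FV (sub X1 D1) (Suc j) z \<le> enat C * VolD X2 D2 (Suc j) (C * n + C) + enat (C * n + C)"
proof (cases "VolD X2 D2 (Suc j) (C * n + C)")
  case (enat v)
  have "MF * n \<le> C * n + C" using C(2) by (meson mult_le_mono1 trans_le_add1)
  then have Fz: "is_cycle (sub X2 D2) j (lin_ext (F j) z)"
    "FV X2 (Suc j) (lin_ext (F j) z) \<le> enat (C * n + C)"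
    using FV_image_le[OF cw(1,2) D1 F z] by (auto intro: order_trans)
  then have "FV (sub X2 D2) (Suc j) (lin_ext (F j) z) \<le> enat v"
    using FV_le_VolD[of X2 D2 "Suc j" _ "C * n + C"] enat by simp
  then obtain w where w: "is_chain (sub X2 D2) (Suc j) w"
    "bnd (sub X2 D2) w = lin_ext (F j) z" "vol w \<le> v"
    by (rule filling_of_FV_le)
  have "\<And>s. s \<in> supp z \<Longrightarrow> finite (supp (F j s))"
    using F(2) z D1 by (auto simp: chain_map_deg_def is_cycle_iff is_chain_def)
  then have "FV (sub X1 D1) (Suc j) z \<le> enat (MG * vol w + MH * vol z)"
    using FV_le_via_homotopy[OF cw(3,4) G GF H z(1)] w by simp
  also have "MG * vol w + MH * vol z \<le> C * v + (C * n + C)"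
  proof -
    have "MG * vol w \<le> C * v" using C(3) w(3) by (rule mult_le_mono)
    moreover have "MH * vol z \<le> MH * (r * n)"
      using vol_le_of_FV_le[OF cw(1) r z(2)] by (rule mult_le_mono2)
    moreover have "MH * (r * n) \<le> C * n" using C(4) by (simp add: mult.assoc[symmetric])
    ultimately show ?thesis by linarith
  qed
  finally show ?thesis using enat by simp
qed (use C in \<open>simp add: enat_0_iff\<close>)

lemma VolD_preceq_of_chain_maps:
  assumes cw: "cw X1" "cw X2" "cw (sub X1 D1)" "cw (sub X2 D2)" and D1: "D1 \<subseteq> cells X1"
    and r: "\<And>s. s \<in> cells X1 \<Longrightarrow> cdim X1 s = Suc j \<Longrightarrow> vol (cinc X1 s) \<le> r"
    and F: "chain_map_deg X1 D1 X2 D2 \<phi> F MF (Suc j)" "chain_map_deg X1 D1 X2 D2 \<phi> F MF j"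
    and G: "chain_map_deg (sub X2 D2) D2 (sub X1 D1) D1 \<psi> G MG (Suc j)"
    and GF: "chain_map_deg (sub X1 D1) D1 (sub X1 D1) D1 \<theta> (\<lambda>i s. lin_ext (G i) (F i s)) MGF j"
    and H: "chain_homotopy_deg (sub X1 D1) (\<lambda>i s. lin_ext (G i) (F i s)) H MH j"
  shows "VolD X1 D1 (Suc j) \<preceq>\<^sub>f VolD X2 D2 (Suc j)"
proof -
  define C where "C = max (max MF MG) (MH * r) + 1"
  have C: "0 < C" "MF \<le> C" "MG \<le> C" "MH * r \<le> C" by (auto simp: C_def)
  have "\<forall>x. VolD X1 D1 (Suc j) x \<le> enat C * VolD X2 D2 (Suc j) (C * x + C) + enat (C * x + C)"
    unfolding VolD_def[of X1 D1]
    using FV_le_VolD_of_chain_maps[OF cw D1 r F G GF H C] by (auto intro!: SUP_least)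
  then show ?thesis unfolding fpreceq_def using C(1) by blast
qed

lemma pair_coarse_equivalence_chain_maps:
  assumes X1: "k_dehn X1 k" "k_dehn (sub X1 D1) k"
    and X2: "k_dehn X2 k" "D2 \<subseteq> cells X2" "k_dehn (sub X2 D2) k"
    and ce: "pair_coarse_equivalence X1 D1 X2 D2 f g L"
  shows "\<exists>F MF. \<forall>i\<le>k. chain_map_deg X1 D1 X2 D2 f F MF i"
    and "\<exists>G MG. \<forall>i\<le>k. chain_map_deg (sub X2 D2) D2 (sub X1 D1) D1 g G MG i"
proof -
  note c1 = k_dehnD[OF X1(1)] and c1s = k_dehnD[OF X1(2)]
    and c2 = k_dehnD[OF X2(1)] and c2s = k_dehnD[OF X2(3)]
  obtain r1 where r1: "\<And>s. s \<in> cells X1 \<Longrightarrow> cdim X1 s \<le> k \<Longrightarrow> vol (cinc X1 s) \<le> r1"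
    using k_dehn_boundary_bound[OF X1(1)] by blast
  obtain r2 where r2: "\<And>s. s \<in> cells (sub X2 D2) \<Longrightarrow> cdim (sub X2 D2) s \<le> k
      \<Longrightarrow> vol (cinc (sub X2 D2) s) \<le> r2"
    using k_dehn_boundary_bound[OF X2(3)] by blast
  have cm: "coarse_map X1 X2 f L" "coarse_map (sub X1 D1) (sub X2 D2) f L"
    "coarse_map (sub (sub X2 D2) D2) (sub (sub X1 D1) D1) g L"
    using ce by (auto simp: pair_coarse_equivalence_def)
  have fill2: "\<And>i. 1 \<le> i \<Longrightarrow> i < k \<Longrightarrow> uniformly_fillable X2 i \<and> uniformly_fillable (sub X2 D2) i"
    and fill1: "\<And>i. 1 \<le> i \<Longrightarrow> i < k
      \<Longrightarrow> uniformly_fillable (sub X1 D1) i \<and> uniformly_fillable (sub (sub X1 D1) D1) i"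
    using c2(3) c2s(3) c1s(3) by simp_all
  have sub2: "cw (sub (sub X2 D2) D2)" "cw (sub (sub X1 D1) D1)"
    "path_connected (sub (sub X1 D1) D1)" "D1 \<subseteq> cells (sub X1 D1)"
    using c2s(1) c1s(1,2) by simp_all
  show "\<exists>F MF. \<forall>i\<le>k. chain_map_deg X1 D1 X2 D2 f F MF i"
    by (rule bounded_chain_map_exists[OF c1(1) c1s(1) c2(1) c2s(1) c2(2) c2s(2) X2(2) cm(1,2) r1 fill2])
  show "\<exists>G MG. \<forall>i\<le>k. chain_map_deg (sub X2 D2) D2 (sub X1 D1) D1 g G MG i"
    by (rule bounded_chain_map_exists[OF c2s(1) sub2(1) c1s(1) sub2(2) c1s(2) sub2(3,4)
      _ cm(3) r2 fill1]) (use ce in \<open>simp add: pair_coarse_equivalence_def\<close>)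
qed

lemma VolD_preceq_of_pair_coarse_equivalence:
  assumes X1: "k_dehn X1 (Suc j)" "D1 \<subseteq> cells X1" "k_dehn (sub X1 D1) (Suc j)"
    and X2: "k_dehn X2 (Suc j)" "D2 \<subseteq> cells X2" "k_dehn (sub X2 D2) (Suc j)"
    and ce: "pair_coarse_equivalence X1 D1 X2 D2 f g L"
  shows "VolD X1 D1 (Suc j) \<preceq>\<^sub>f VolD X2 D2 (Suc j)"
proof -
  note c1 = k_dehnD[OF X1(1)] and c1s = k_dehnD[OF X1(3)]
    and c2 = k_dehnD[OF X2(1)] and c2s = k_dehnD[OF X2(3)]
  obtain F MF G MG where F: "\<forall>i\<le>Suc j. chain_map_deg X1 D1 X2 D2 f F MF i"
    and G: "\<forall>i\<le>Suc j. chain_map_deg (sub X2 D2) D2 (sub X1 D1) D1 g G MG i"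
    using pair_coarse_equivalence_chain_maps[OF X1(1,3) X2 ce] by metis
  let ?GF = "\<lambda>i s. lin_ext (G i) (F i s)"
  have GF: "chain_map_deg (sub X1 D1) D1 (sub X1 D1) D1 (g \<circ> f) ?GF (MG * MF) i" if "i \<le> Suc j" for i
    by (rule chain_map_deg_comp[OF c1(1) c2s(1) X1(2) _ _ that]) (use F G in auto)
  obtain r1 where r1: "\<And>s. s \<in> cells X1 \<Longrightarrow> cdim X1 s \<le> Suc j \<Longrightarrow> vol (cinc X1 s) \<le> r1"
    using k_dehn_boundary_bound[OF X1(1)] by blast
  obtain r1s where r1s: "\<And>s. s \<in> cells (sub X1 D1) \<Longrightarrow> cdim (sub X1 D1) s \<le> Suc j
      \<Longrightarrow> vol (cinc (sub X1 D1) s) \<le> r1s"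
    using k_dehn_boundary_bound[OF X1(3)] by blast
  have "\<exists>H MH. \<forall>i<Suc j. chain_homotopy_deg (sub X1 D1) ?GF H MH i"
    by (rule bounded_homotopy_exists[where k = "Suc j" and E = L and r = r1s and MG = "MG * MF"
        and Ds = D1 and Dt = D1 and \<theta> = "g \<circ> f", OF c1s(1,2)])
      (use GF ce r1s c1s(3) in \<open>auto simp: pair_coarse_equivalence_def coarse_inverse_def\<close>)
  then obtain H MH where H: "\<forall>i<Suc j. chain_homotopy_deg (sub X1 D1) ?GF H MH i" by blast
  have maps: "chain_map_deg X1 D1 X2 D2 f F MF (Suc j)" "chain_map_deg X1 D1 X2 D2 f F MF j"
    "chain_map_deg (sub X2 D2) D2 (sub X1 D1) D1 g G MG (Suc j)"
    "chain_map_deg (sub X1 D1) D1 (sub X1 D1) D1 (g \<circ> f) ?GF (MG * MF) j"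
    "chain_homotopy_deg (sub X1 D1) ?GF H MH j"
    using F G GF H by auto
  show ?thesis
    by (rule VolD_preceq_of_chain_maps[OF c1(1) c2(1) c1s(1) c2s(1) X1(2) _ maps]) (rule r1; simp)
qed

theorem mainTheorem1:
  fixes X1 :: "'a cellcx" and D1 :: "'a set" and X2 :: "'b cellcx" and D2 :: "'b set"
    and k :: nat
  assumes "1 \<le> k"
    and "k_dehn X1 k" and "subcomplex X1 D1" and "k_dehn (sub X1 D1) k"
    and "k_dehn X2 k" and "subcomplex X2 D2" and "k_dehn (sub X2 D2) k"
    and "qi_pairs X1 D1 X2 D2"
  shows "VolD X1 D1 k \<asymp>\<^sub>f VolD X2 D2 k"
proof -
  obtain j where k: "k = Suc j" using assms(1) by (cases k) auto
  note X1 = assms(2,4)[unfolded k] and X2 = assms(5,7)[unfolded k]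
  have D: "D1 \<subseteq> cells X1" "D2 \<subseteq> cells X2" using assms(3,6) by (simp_all add: subcomplex_def)
  obtain f g L where ce: "pair_coarse_equivalence X1 D1 X2 D2 f g L"
    using qi_pairs_coarse_equivalence[OF k_dehnD(1)[OF X1(1)] k_dehnD(1)[OF X2(1)]
      k_dehnD(1)[OF X1(2)] k_dehnD(1)[OF X2(2)] k_dehnD(2)[OF X2(1)] k_dehnD(2)[OF X2(2)] D assms(8)]
    by blast
  show ?thesis
    unfolding fasymp_def k
    using VolD_preceq_of_pair_coarse_equivalence[OF X1(1) D(1) X1(2) X2(1) D(2) X2(2) ce]
      VolD_preceq_of_pair_coarse_equivalence[OF X2(1) D(2) X2(2) X1(1) D(1) X1(2)
        pair_coarse_equivalence_sym[OF ce]]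
    by blast
qed

end
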